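(* Let $x=\sum_{i=1}^n x_iv_i\in V$ and $I=\mathrm{supp}_x$. Let $F$ be a nonempty face of $C_I$, let $J=\{i\in I:\alpha_i\in F\}$ and set $v_F=\sum_{i\in J}x_iv_i$. Then $\mu_{\mathfrak a}:A\cdot v_F\to\mathrm{relint}\,F$ is a diffeomorphism onto $\mathrm{relint}\,F$. Moreover, $\overline{A\cdot x}$ is the disjoint union of the orbits $A\cdot v_F$, as $F$ runs over the set of nonempty faces of $C_I$.
   Context: Let $V$ be a finite-dimensional real vector space with a scalar product $\langle\cdot,\cdot\rangle$. Let $G\subset\mathrm{GL}(V)$ be a connected closed subgroup, closed under transpose, with Lie algebra $\mathfrak g$, such that $G=K\exp(\mathfrak p)$ with $K=G\cap\mathrm O(V)$, $\mathfrak p=\mathfrak g\cap\mathrm{Sym}(V)$. Let $\mathfrak a\subset\mathfrak p$ be an Abelian subalgebra, $A=\exp(\mathfrak a)$, and $\mu_{\mathfrak a}:V\to\mathfrak a^*$, $\mu_{\mathfrak a}(x)(\xi)=\langle\xi x,x\rangle$. Fix an orthonormal basis $v_1,\dots,v_n$ of $V$ simultaneously diagonalizing $\mathfrak a$, with $\xi v_i=\alpha_i(\xi)v_i$, $\alpha_i\in\mathfrak a^*$. For $x=\sum x_iv_i$, $\mathrm{supp}_x=\{i:x_i\ne0\}$; for $I\subset\{1,\dots,n\}$, $C_I=\{\sum_{i\in I}s_i\alpha_i:s_i\ge0\}$. A face of a convex set $E$ is a convex $F\subset E$ such that if $x,y\in E$ and the relative interior of $[x,y]$ meets $F$ then $[x,y]\subset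 F$; $\mathrm{relint}$ denotes the interior in the affine hull. *)

theory Defs
  imports "HOL-Analysis.Analysis"
begin

coinductive smooth_on :: "'x::euclidean_space set \<Rightarrow> ('x \<Rightarrow> 'y::euclidean_space) \<Rightarrow> bool" where
  "\<lbrakk> open U; g differentiable_on U;
     \<And>h. smooth_on U (\<lambda>y. frechet_derivative g (at y) h) \<rbrakk> \<Longrightarrow> smooth_on U g"

text \<open>Smooth maps on arbitrary subsets of Euclidean spaces (Milnor): locally the
  restriction of a C-infinity map defined on an open set.\<close>
definition smooth_map_on :: "'x::euclidean_space set \<Rightarrow> ('x \<Rightarrow> 'y::euclidean_space) \<Rightarrow> bool" where
  "smooth_map_on S f \<longleftrightarrow>
     (\<forall>x\<in>S. \<exists>U g. open U \<and> x \<in> U \<and> smooth_on U g \<and> (\<forall>y\<in>S \<inter> U. g y = f y))"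

definition diffeo_onto :: "('x::euclidean_space \<Rightarrow> 'y::euclidean_space) \<Rightarrow> 'x set \<Rightarrow> 'y set \<Rightarrow> bool" where
  "diffeo_onto f M N \<longleftrightarrow> bij_betw f M N \<and> smooth_map_on M f \<and> smooth_map_on N (inv_into M f)"

definition op_exp :: "('v::real_normed_vector \<Rightarrow> 'v) \<Rightarrow> 'v \<Rightarrow> 'v" where
  "op_exp T y = (\<Sum>n. (T ^^ n) y /\<^sub>R fact n)"

text \<open>Orbit A.y of A = exp(a), where a acts on V via act.\<close>
definition orbitA :: "('a \<Rightarrow> 'v \<Rightarrow> 'v::real_normed_vector) \<Rightarrow> 'v \<Rightarrow> 'v set" where
  "orbitA act y = {op_exp (act \<xi>) y | \<xi>. True}"

text \<open>Identification of the dual space a* with a (a euclidean space) via its inner product: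
  a linear functional f corresponds to the vector sum_b f(b) b over an orthonormal basis.\<close>
definition dual_vec :: "('a::euclidean_space \<Rightarrow> real) \<Rightarrow> 'a" where
  "dual_vec f = (\<Sum>b\<in>Basis. f b *\<^sub>R b)"

definition mu_a :: "('a::euclidean_space \<Rightarrow> 'v \<Rightarrow> 'v::real_inner) \<Rightarrow> 'v \<Rightarrow> 'a" where
  "mu_a act x = dual_vec (\<lambda>\<xi>. inner (act \<xi> x) x)"

definition supp :: "('i \<Rightarrow> 'v::real_inner) \<Rightarrow> 'v \<Rightarrow> 'i set" where
  "supp v x = {i. inner x (v i) \<noteq> 0}"

definition coneC :: "('i \<Rightarrow> 'a::real_vector) \<Rightarrow> 'i set \<Rightarrow> 'a set" where
  "coneC \<alpha> I = {(\<Sum>i\<in>I. s i *\<^sub>R \<alpha> i) | s. \<forall>i\<in>I. s i \<ge> 0}"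

end

theory Submission
  imports Defs
begin

text \<open>In an orthonormal eigenbasis \<open>v\<^sub>i\<close> of \<open>\<aa>\<close> the group \<open>A\<close> acts diagonally: \<open>exp \<xi>\<close> multiplies the
  \<open>i\<close>-th coordinate by \<open>e\<^bsup>\<alpha>\<^sub>i(\<xi>)\<^esup>\<close>, and \<open>\<mu>(y) = \<Sum>\<^sub>i y\<^sub>i\<^sup>2 \<alpha>\<^sub>i\<close>. Hence on the orbit of \<open>v\<^sub>F\<close> the moment map
  is \<open>\<xi> \<mapsto> \<Sum>\<^bsub>i\<in>J\<^esub> x\<^sub>i\<^sup>2 e\<^bsup>2\<alpha>\<^sub>i(\<xi>)\<^esup> \<alpha>\<^sub>i\<close>, the gradient of a strictly convex function on
  \<open>span {\<alpha>\<^sub>i | i \<in> J}\<close>. Strict convexity gives injectivity; coercivity of that function minus a linear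
  form \<open>p\<close> with \<open>p\<close> in the relative interior of \<open>F = C\<^sub>J\<close> gives surjectivity onto \<open>relint F\<close>. Extending
  the map by the identity on the orthogonal complement of the span produces an injective immersion
  of \<open>\<aa>\<close>, so the inverse function theorem makes the inverse smooth.

  For the closure: if \<open>\<eta>\<close> exposes the face \<open>F\<close>, then \<open>exp(\<zeta> + t\<eta>) x \<rightarrow> exp(\<zeta>) v\<^sub>F\<close> as \<open>t \<rightarrow> \<infinity>\<close>.
  Conversely, if \<open>exp(\<xi>\<^sub>n) x \<rightarrow> y\<close>, then \<open>\<alpha>\<^sub>i(\<xi>\<^sub>n)\<close> converges for \<open>y\<^sub>i \<noteq> 0\<close> and tends to \<open>-\<infinity>\<close> for the
  other \<open>i \<in> supp x\<close>; pairing a relation \<open>\<Sum> s\<^sub>i\<alpha>\<^sub>i \<in> C\<^sub>J\<close> with \<open>\<xi>\<^sub>n\<close> shows that \<open>C\<^sub>J\<close> is a face with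
  generator set \<open>J = supp y\<close>, and \<open>y\<close> lies in the orbit of \<open>v\<^bsub>C\<^sub>J\<^esub>\<close>.\<close>

section \<open>Smooth maps\<close>

lemma smooth_onD:
  assumes "smooth_on U g"
  shows "open U" "g differentiable_on U" "\<And>h. smooth_on U (\<lambda>y. frechet_derivative g (at y) h)"
  using assms by (auto elim: smooth_on.cases)

lemma smooth_on_has_derivative:
  assumes "smooth_on U g" "y \<in> U"
  shows "(g has_derivative frechet_derivative g (at y)) (at y)"
proof -
  have "g differentiable (at y)"
    using smooth_onD(1,2)[OF assms(1)] assms(2) by (simp add: differentiable_on_eq_differentiable_at)
  then show ?thesis using frechet_derivative_works by blast
qed

lemma smooth_on_coinduct_upto:
  fixes P :: "('x::euclidean_space \<Rightarrow> 'y::euclidean_space) \<Rightarrow> bool"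
  assumes U: "open U" and Pg: "P g"
    and step: "\<And>g. P g \<Longrightarrow> \<exists>D. (\<forall>y\<in>U. (g has_derivative D y) (at y)) \<and>
                   (\<forall>h. \<exists>f. (P f \<or> smooth_on U f) \<and> (\<forall>y\<in>U. f y = D y h))"
  shows "smooth_on U g"
proof -
  define X where "X U' g \<longleftrightarrow> U' = U \<and> (\<exists>f. (P f \<or> smooth_on U f) \<and> (\<forall>y\<in>U. g y = f y))"
    for U' and g :: "'x \<Rightarrow> 'y"
  have "X U g" using Pg unfolding X_def by blast
  then show ?thesis
  proof (rule smooth_on.coinduct[of X U g])
    fix U' g assume "X U' g"
    then obtain f where UU: "U' = U" and f: "P f \<or> smooth_on U f" and gf: "\<forall>y\<in>U. g y = f y"
      unfolding X_def by blast
    obtain D where D: "\<forall>y\<in>U. (f has_derivative D y) (at y)"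
      and Dh: "\<forall>h. \<exists>f'. (P f' \<or> smooth_on U f') \<and> (\<forall>y\<in>U. f' y = D y h)"
    proof (cases "P f")
      case True
      then show ?thesis using step that by blast
    next
      case False
      then have sf: "smooth_on U f" using f by blast
      show ?thesis
        using that[of "\<lambda>y. frechet_derivative f (at y)"] smooth_on_has_derivative[OF sf] smooth_onD(3)[OF sf]
        by blast
    qed
    have gD: "\<forall>y\<in>U. (g has_derivative D y) (at y)"
      using D gf U by (metis has_derivative_transform_within_open)
    have "g differentiable_on U"
      using gD by (meson differentiable_at_imp_differentiable_on differentiable_def)
    moreover have "X U (\<lambda>y. frechet_derivative g (at y) h)" for h
    proof -
      obtain f' where f': "P f' \<or> smooth_on U f'" "\<forall>y\<in>U. f' y = D y h" using Dh by blast
      then have "\<forall>y\<in>U. frechet_derivative g (at y) h = f' y"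
        using gD frechet_derivative_at by metis
      then show ?thesis unfolding X_def using f'(1) by blast
    qed
    ultimately show "\<exists>U g'. U' = U \<and> g = g' \<and> open U \<and> g' differentiable_on U \<and>
        (\<forall>h. X U (\<lambda>y. frechet_derivative g' (at y) h) \<or> smooth_on U (\<lambda>y. frechet_derivative g' (at y) h))"
      using UU U by blast
  qed
qed

lemma smooth_on_cong:
  assumes g: "smooth_on U g" and fg: "\<And>y. y \<in> U \<Longrightarrow> f y = g y"
  shows "smooth_on U f"
proof (rule smooth_on_coinduct_upto[of U "\<lambda>f'. \<forall>y\<in>U. f' y = g y"])
  fix f' assume f': "\<forall>y\<in>U. f' y = g y"
  have "(f' has_derivative frechet_derivative g (at y)) (at y)" if "y \<in> U" for y
    using has_derivative_transform_within_open[OF smooth_on_has_derivative[OF g that] smooth_onD(1)[OF g] that] f'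
    by simp
  then show "\<exists>D. (\<forall>y\<in>U. (f' has_derivative D y) (at y)) \<and>
              (\<forall>h. \<exists>f. ((\<forall>y\<in>U. f y = g y) \<or> smooth_on U f) \<and> (\<forall>y\<in>U. f y = D y h))"
    using smooth_onD(3)[OF g] by (intro exI[of _ "\<lambda>y. frechet_derivative g (at y)"]) blast
qed (use smooth_onD(1)[OF g] fg in auto)

lemma smooth_on_const: "open U \<Longrightarrow> smooth_on U (\<lambda>y. c)"
  by (rule smooth_on_coinduct_upto[of U "\<lambda>g. \<exists>c. g = (\<lambda>y. c)"]) (auto intro!: exI[of _ "\<lambda>y h. 0"])

lemma smooth_on_linear:
  fixes f :: "'x::euclidean_space \<Rightarrow> 'y::euclidean_space"
  assumes U: "open U" and f: "linear f"
  shows "smooth_on U f"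
proof (rule smooth_on_coinduct_upto[of U "\<lambda>g. g = f"])
  show "\<exists>D. (\<forall>y\<in>U. (g has_derivative D y) (at y)) \<and> (\<forall>h. \<exists>f'. (f' = f \<or> smooth_on U f') \<and> (\<forall>y\<in>U. f' y = D y h))"
    if "g = f" for g
    using that f smooth_on_const[OF U]
    by (intro exI[of _ "\<lambda>y. f"]) (auto simp: linear_conv_bounded_linear bounded_linear_imp_has_derivative)
qed (use U in auto)

text \<open>By the product rule, sums of products \<open>r y *\<^sub>R f y\<close> of smooth maps are closed under
  directional derivatives, which makes them a coinduction invariant.\<close>

definition sum_of_products :: "(('x \<Rightarrow> real) \<times> ('x \<Rightarrow> 'y::real_vector)) list \<Rightarrow> 'x \<Rightarrow> 'y" where
  "sum_of_products L y = (\<Sum>(r, f)\<leftarrow>L. r y *\<^sub>R f y)"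

definition sum_of_products_deriv ::
    "(('x::real_normed_vector \<Rightarrow> real) \<times> ('x \<Rightarrow> 'y::real_normed_vector)) list \<Rightarrow> 'x \<Rightarrow>
       (('x \<Rightarrow> real) \<times> ('x \<Rightarrow> 'y)) list" where
  "sum_of_products_deriv L h =
     concat (map (\<lambda>(r, f). [(\<lambda>y. frechet_derivative r (at y) h, f), (r, \<lambda>y. frechet_derivative f (at y) h)]) L)"

lemma sum_of_products_deriv_eq:
  "sum_of_products (sum_of_products_deriv L h) y =
     (\<Sum>(r, f)\<leftarrow>L. frechet_derivative r (at y) h *\<^sub>R f y + r y *\<^sub>R frechet_derivative f (at y) h)"
  by (induction L) (auto simp: sum_of_products_def sum_of_products_deriv_def)

lemma sum_of_products_has_derivative:
  assumes "\<forall>(r, f)\<in>set L. r differentiable (at y) \<and> f differentiable (at y)"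
  shows "(sum_of_products L has_derivative
           (\<lambda>h. \<Sum>(r, f)\<leftarrow>L. frechet_derivative r (at y) h *\<^sub>R f y + r y *\<^sub>R frechet_derivative f (at y) h)) (at y)"
  using assms
proof (induction L)
  case Nil
  then show ?case by (simp add: sum_of_products_def)
next
  case (Cons rf L)
  obtain r f where rf: "rf = (r, f)" by fastforce
  have r: "(r has_derivative frechet_derivative r (at y)) (at y)"
    and f: "(f has_derivative frechet_derivative f (at y)) (at y)"
    using Cons.prems rf frechet_derivative_works by auto
  from has_derivative_add[OF has_derivative_scaleR[OF r f] Cons.IH] Cons.prems show ?case
    by (simp add: rf sum_of_products_def add_ac)
qed

lemma smooth_on_sum_of_products:
  fixes L :: "(('x::euclidean_space \<Rightarrow> real) \<times> ('x \<Rightarrow> 'y::euclidean_space)) list"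
  assumes U: "open U" and L: "\<forall>(r, f)\<in>set L. smooth_on U r \<and> smooth_on U f"
  shows "smooth_on U (sum_of_products L)"
proof (rule smooth_on_coinduct_upto[of U
      "\<lambda>g. \<exists>L. (\<forall>(r, f)\<in>set L. smooth_on U r \<and> smooth_on U f) \<and> (\<forall>y\<in>U. g y = sum_of_products L y)"])
  fix g :: "'x \<Rightarrow> 'y"
  assume "\<exists>L. (\<forall>(r, f)\<in>set L. smooth_on U r \<and> smooth_on U f) \<and> (\<forall>y\<in>U. g y = sum_of_products L y)"
  then obtain L where L: "\<forall>(r, f)\<in>set L. smooth_on U r \<and> smooth_on U f"
    and g: "\<forall>y\<in>U. g y = sum_of_products L y" by blast
  define D where "D y h = sum_of_products (sum_of_products_deriv L h) y" for y h
  have "(g has_derivative D y) (at y)" if y: "y \<in> U" for y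
  proof -
    have "\<forall>(r, f)\<in>set L. r differentiable (at y) \<and> f differentiable (at y)"
      using L y by (auto dest!: smooth_on_has_derivative simp: differentiable_def)
    from sum_of_products_has_derivative[OF this] have "(sum_of_products L has_derivative D y) (at y)"
      unfolding D_def sum_of_products_deriv_eq .
    then show ?thesis by (rule has_derivative_transform_within_open[OF _ U y]) (use g in auto)
  qed
  moreover have "\<exists>f. ((\<exists>L. (\<forall>(r, f)\<in>set L. smooth_on U r \<and> smooth_on U f) \<and>
                 (\<forall>y\<in>U. f y = sum_of_products L y)) \<or> smooth_on U f) \<and> (\<forall>y\<in>U. f y = D y h)" for h
  proof -
    have "\<forall>(r, f)\<in>set (sum_of_products_deriv L h). smooth_on U r \<and> smooth_on U f"
      using L by (auto simp: sum_of_products_deriv_def dest: smooth_onD(3))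
    then show ?thesis by (auto simp: D_def)
  qed
  ultimately show "\<exists>D. (\<forall>y\<in>U. (g has_derivative D y) (at y)) \<and>
     (\<forall>h. \<exists>f. ((\<exists>L. (\<forall>(r, f)\<in>set L. smooth_on U r \<and> smooth_on U f) \<and> (\<forall>y\<in>U. f y = sum_of_products L y))
            \<or> smooth_on U f) \<and> (\<forall>y\<in>U. f y = D y h))"
    by blast
qed (use U L in auto)

lemma smooth_on_scaleR:
  fixes r :: "'x::euclidean_space \<Rightarrow> real" and f :: "'x \<Rightarrow> 'y::euclidean_space"
  assumes "smooth_on U r" "smooth_on U f"
  shows "smooth_on U (\<lambda>y. r y *\<^sub>R f y)"
  using smooth_on_sum_of_products[of U "[(r, f)]"] assms smooth_onD(1)[OF assms(1)]
  by (auto elim: smooth_on_cong simp: sum_of_products_def)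

lemma smooth_on_add:
  fixes f g :: "'x::euclidean_space \<Rightarrow> 'y::euclidean_space"
  assumes f: "smooth_on U f" and g: "smooth_on U g"
  shows "smooth_on U (\<lambda>y. f y + g y)"
proof -
  have U: "open U" using smooth_onD(1)[OF f] .
  have "smooth_on U (sum_of_products [(\<lambda>y. 1, f), (\<lambda>y. 1, g)])"
    by (intro smooth_on_sum_of_products[OF U]) (auto simp: smooth_on_const[OF U] f g)
  then show ?thesis by (rule smooth_on_cong) (simp add: sum_of_products_def)
qed

lemma smooth_on_mult:
  fixes f g :: "'x::euclidean_space \<Rightarrow> real"
  assumes "smooth_on U f" "smooth_on U g"
  shows "smooth_on U (\<lambda>y. f y * g y)"
  using smooth_on_scaleR[OF assms] by simp

lemma smooth_on_sum:
  fixes f :: "'i \<Rightarrow> 'x::euclidean_space \<Rightarrow> 'y::euclidean_space"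
  assumes U: "open U" and f: "\<And>i. i \<in> K \<Longrightarrow> smooth_on U (f i)"
  shows "smooth_on U (\<lambda>y. \<Sum>i\<in>K. f i y)"
  using f by (induction K rule: infinite_finite_induct) (auto intro: smooth_on_const[OF U] smooth_on_add)

lemma smooth_on_compose_linear:
  fixes f :: "'x::euclidean_space \<Rightarrow> 'y::euclidean_space" and l :: "'y \<Rightarrow> 'z::euclidean_space"
  assumes l: "linear l" and f: "smooth_on U f"
  shows "smooth_on U (\<lambda>y. l (f y))"
proof (rule smooth_on_coinduct_upto[of U "\<lambda>g. \<exists>f. smooth_on U f \<and> g = (\<lambda>y. l (f y))"])
  have bl: "bounded_linear l" using l by (simp add: linear_conv_bounded_linear)
  fix g assume "\<exists>f. smooth_on U f \<and> g = (\<lambda>y. l (f y))"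
  then obtain f where f: "smooth_on U f" and g: "g = (\<lambda>y. l (f y))" by blast
  show "\<exists>D. (\<forall>y\<in>U. (g has_derivative D y) (at y)) \<and>
         (\<forall>h. \<exists>f'. ((\<exists>f. smooth_on U f \<and> f' = (\<lambda>y. l (f y))) \<or> smooth_on U f') \<and> (\<forall>y\<in>U. f' y = D y h))"
    using bounded_linear.has_derivative[OF bl smooth_on_has_derivative[OF f]] smooth_onD(3)[OF f] g
    by (intro exI[of _ "\<lambda>y h. l (frechet_derivative f (at y) h)"]) blast
qed (use f smooth_onD(1)[OF f] in auto)

lemma smooth_on_exp_inner:
  fixes b :: "'x::euclidean_space"
  assumes U: "open U"
  shows "smooth_on U (\<lambda>y. exp (inner b y))"
proof (rule smooth_on_coinduct_upto[of U "\<lambda>g. \<exists>c. g = (\<lambda>y. c * exp (inner b y))"])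
  fix g assume "\<exists>c. g = (\<lambda>y. c * exp (inner b y))"
  then obtain c where g: "g = (\<lambda>y. c * exp (inner b y))" by blast
  have "(g has_derivative (\<lambda>h. (c * inner b h) * exp (inner b y))) (at y)" for y
    unfolding g by (auto intro!: derivative_eq_intros simp: algebra_simps)
  then show "\<exists>D. (\<forall>y\<in>U. (g has_derivative D y) (at y)) \<and>
         (\<forall>h. \<exists>f. ((\<exists>c. f = (\<lambda>y. c * exp (inner b y))) \<or> smooth_on U f) \<and> (\<forall>y\<in>U. f y = D y h))"
    by (intro exI[of _ "\<lambda>y h. (c * inner b h) * exp (inner b y)"]) blast
qed (use U in \<open>auto intro: exI[of _ 1]\<close>)

section \<open>Smoothness of inverses of injective immersions\<close>

lemma linear_euclidean_expansion:
  fixes f :: "'a::euclidean_space \<Rightarrow> 'b::real_vector"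
  assumes "linear f"
  shows "f z = (\<Sum>b\<in>Basis. inner z b *\<^sub>R f b)"
proof -
  have "f z = f (\<Sum>b\<in>Basis. inner z b *\<^sub>R b)" by (simp add: euclidean_representation)
  also have "\<dots> = (\<Sum>b\<in>Basis. inner z b *\<^sub>R f b)" using assms by (simp add: linear_sum linear_scale)
  finally show ?thesis .
qed

locale injective_immersion =
  fixes \<Phi> :: "'a::euclidean_space \<Rightarrow> 'a"
  assumes smooth: "smooth_on UNIV \<Phi>" and inj: "inj \<Phi>"
    and deriv_inj: "\<And>\<xi>. inj (frechet_derivative \<Phi> (at \<xi>))"
begin

definition L :: "'a \<Rightarrow> 'a \<Rightarrow> 'a" where "L \<xi> = frechet_derivative \<Phi> (at \<xi>)"
definition Linv :: "'a \<Rightarrow> 'a \<Rightarrow> 'a" where "Linv \<xi> = inv (L \<xi>)"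
definition dL :: "'a \<Rightarrow> 'a \<Rightarrow> 'a \<Rightarrow> 'a" where "dL b \<xi> = frechet_derivative (\<lambda>\<eta>. L \<eta> b) (at \<xi>)"

text \<open>\<open>D2 \<xi> y d\<close> is the second derivative \<open>D\<^sup>2\<Phi>(\<xi>)(y, d)\<close>, assembled from the columns of \<open>L\<close>.\<close>

definition D2 :: "'a \<Rightarrow> 'a \<Rightarrow> 'a \<Rightarrow> 'a" where "D2 \<xi> y d = (\<Sum>b\<in>Basis. inner y b *\<^sub>R dL b \<xi> d)"

lemma has_derivative_L: "(\<Phi> has_derivative L \<xi>) (at \<xi>)"
  unfolding L_def using smooth_on_has_derivative[OF smooth] by simp

lemma linear_L: "linear (L \<xi>)"
  using has_derivative_L has_derivative_linear by blast

lemma L_Linv: "L \<xi> (Linv \<xi> y) = y"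
proof -
  have "surj (L \<xi>)"
    using linear_injective_imp_surjective[OF linear_L] deriv_inj unfolding L_def by auto
  then show ?thesis unfolding Linv_def by (simp add: surj_f_inv_f)
qed

lemma Linv_L: "Linv \<xi> (L \<xi> z) = z"
  unfolding Linv_def using deriv_inj unfolding L_def by (simp add: inv_f_f)

lemma linear_Linv: "linear (Linv \<xi>)"
  unfolding Linv_def using inj_linear_imp_inv_linear[OF linear_L] deriv_inj unfolding L_def by blast

lemma smooth_on_L_column: "smooth_on UNIV (\<lambda>\<xi>. L \<xi> b)"
  unfolding L_def using smooth_onD(3)[OF smooth] by blast

lemma has_derivative_L_column: "((\<lambda>\<eta>. L \<eta> b) has_derivative dL b \<xi>) (at \<xi>)"
  unfolding dL_def using smooth_on_has_derivative[OF smooth_on_L_column] by simp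

lemma D2_eq: "L \<xi> y' + D2 \<xi> y d = (\<Sum>b\<in>Basis. inner y' b *\<^sub>R L \<xi> b + inner y b *\<^sub>R dL b \<xi> d)"
  unfolding D2_def by (simp add: sum.distrib linear_euclidean_expansion[OF linear_L, of \<xi> y'])

definition fibre_map :: "'a \<times> 'a \<Rightarrow> 'a \<times> 'a" where "fibre_map p = (fst p, L (fst p) (snd p))"

lemma fibre_map_expansion: "fibre_map = (\<lambda>p. (fst p, \<Sum>b\<in>Basis. inner (snd p) b *\<^sub>R L (fst p) b))"
  unfolding fibre_map_def by (rule ext, subst linear_euclidean_expansion[OF linear_L]) (rule refl)

lemma fibre_map_has_derivative:
  "(fibre_map has_derivative (\<lambda>dp. (fst dp, L \<xi> (snd dp) + D2 \<xi> z (fst dp)))) (at (\<xi>, z))"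
proof -
  have column: "((\<lambda>p. inner (snd p) b *\<^sub>R L (fst p) b) has_derivative
        (\<lambda>dp. inner (snd dp) b *\<^sub>R L \<xi> b + inner z b *\<^sub>R dL b \<xi> (fst dp))) (at (\<xi>, z))" for b
  proof -
    have "((\<lambda>\<eta>. L \<eta> b) has_derivative dL b \<xi>) (at (fst (\<xi>, z)))"
      using has_derivative_L_column by simp
    from has_derivative_compose[OF bounded_linear_imp_has_derivative[OF bounded_linear_fst] this]
    have l: "((\<lambda>p. L (fst p) b) has_derivative (\<lambda>dp. dL b \<xi> (fst dp))) (at (\<xi>, z))"
      by simp
    have i: "((\<lambda>p. inner (snd p) b) has_derivative (\<lambda>dp. inner (snd dp) b)) (at (\<xi>, z))"
      by (intro bounded_linear_imp_has_derivative bounded_linear_inner_left_comp bounded_linear_snd)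
    show ?thesis using has_derivative_scaleR[OF i l] by (simp add: add_ac)
  qed
  show ?thesis
    unfolding D2_eq fibre_map_expansion
    by (intro has_derivative_Pair has_derivative_sum column has_derivative_fst[OF has_derivative_ident])
qed

lemma continuous_on_fibre_map: "continuous_on UNIV fibre_map"
proof -
  have "continuous_on UNIV (\<lambda>\<eta>. L \<eta> b)" for b
    using has_derivative_continuous[OF has_derivative_L_column] by (simp add: continuous_at_imp_continuous_on)
  then have column: "continuous_on UNIV (\<lambda>p. L (fst p) b)" for b
    by (rule continuous_on_compose2[OF _ continuous_on_fst[OF continuous_on_id] subset_UNIV])
  show ?thesis
    unfolding fibre_map_expansion
    by (intro continuous_intros column)
qed

text \<open>The fibre map is a homeomorphism with inverse \<open>(\<xi>, c) \<mapsto> (\<xi>, Linv \<xi> c)\<close>, so the inverse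
  function theorem differentiates \<open>Linv\<close> in \<open>\<xi>\<close>.\<close>

lemma Linv_has_derivative:
  "((\<lambda>\<xi>. Linv \<xi> c) has_derivative (\<lambda>d. - Linv \<xi> (D2 \<xi> (Linv \<xi> c) d))) (at \<xi>)"
proof -
  define z where "z = Linv \<xi> c"
  define g' where "g' dp = (fst dp, Linv \<xi> (snd dp - D2 \<xi> z (fst dp)))" for dp
  have "((\<lambda>p. (fst p, Linv (fst p) (snd p))) has_derivative g') (at (fibre_map (\<xi>, z)))"
  proof (rule has_derivative_inverse_strong[OF open_UNIV UNIV_I continuous_on_fibre_map])
    show "(fibre_map has_derivative (\<lambda>dp. (fst dp, L \<xi> (snd dp) + D2 \<xi> z (fst dp)))) (at (\<xi>, z))"
      by (rule fibre_map_has_derivative)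
  qed (auto simp: fibre_map_def Linv_L L_Linv g'_def)
  then have "((\<lambda>p. (fst p, Linv (fst p) (snd p))) has_derivative g') (at (\<xi>, c))"
    by (simp add: fibre_map_def z_def L_Linv)
  from has_derivative_snd[OF has_derivative_compose[OF has_derivative_Pair[OF has_derivative_ident has_derivative_const] this]]
  show ?thesis
    using linear_neg[OF linear_Linv] by (simp add: g'_def z_def)
qed

lemma Linv_euclidean_expansion: "Linv \<xi> w = (\<Sum>e\<in>Basis. inner w e *\<^sub>R Linv \<xi> e)"
  by (rule linear_euclidean_expansion[OF linear_Linv])

text \<open>Since \<open>D(Linv) = - Linv \<circ> D2 \<circ> Linv\<close>, this algebra is closed under directional derivatives,
  which by coinduction makes all its members smooth.\<close>

inductive Linv_algebra :: "('a \<Rightarrow> real) \<Rightarrow> bool" where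
  smooth: "smooth_on UNIV f \<Longrightarrow> Linv_algebra f"
| entry: "Linv_algebra (\<lambda>\<xi>. inner (Linv \<xi> c) b)"
| add: "Linv_algebra f \<Longrightarrow> Linv_algebra g \<Longrightarrow> Linv_algebra (\<lambda>\<xi>. f \<xi> + g \<xi>)"
| mult: "Linv_algebra f \<Longrightarrow> Linv_algebra g \<Longrightarrow> Linv_algebra (\<lambda>\<xi>. f \<xi> * g \<xi>)"

lemma Linv_algebra_sum: "(\<And>i. i \<in> K \<Longrightarrow> Linv_algebra (f i)) \<Longrightarrow> Linv_algebra (\<lambda>\<xi>. \<Sum>i\<in>K. f i \<xi>)"
  by (induction K rule: infinite_finite_induct)
    (auto intro: Linv_algebra.add Linv_algebra.smooth smooth_on_const[OF open_UNIV])

lemma Linv_algebra_uminus: "Linv_algebra f \<Longrightarrow> Linv_algebra (\<lambda>\<xi>. - f \<xi>)"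
  using Linv_algebra.mult[OF Linv_algebra.smooth[OF smooth_on_const[OF open_UNIV, of "-1"]], of f] by simp

lemma Linv_algebra_entry_derivative:
  "Linv_algebra (\<lambda>\<xi>. - inner (Linv \<xi> (D2 \<xi> (Linv \<xi> c) h)) b)"
proof -
  have "inner (Linv \<xi> (D2 \<xi> (Linv \<xi> c) h)) b =
    (\<Sum>b'\<in>Basis. inner (Linv \<xi> c) b' * (\<Sum>e\<in>Basis. inner (dL b' \<xi> h) e * inner (Linv \<xi> e) b))" for \<xi>
  proof -
    have "Linv \<xi> (D2 \<xi> (Linv \<xi> c) h) = (\<Sum>b'\<in>Basis. inner (Linv \<xi> c) b' *\<^sub>R Linv \<xi> (dL b' \<xi> h))"
      unfolding D2_def using linear_Linv by (simp add: linear_sum linear_scale)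
    then show ?thesis
      by (simp add: Linv_euclidean_expansion[of \<xi> "dL _ \<xi> h"] inner_sum_left sum_distrib_left)
  qed
  moreover have "Linv_algebra (\<lambda>\<xi>. inner (dL b' \<xi> h) e)" for b' e
  proof -
    have "smooth_on UNIV (\<lambda>\<xi>. dL b' \<xi> h)"
      unfolding dL_def using smooth_onD(3)[OF smooth_on_L_column] .
    from smooth_on_compose_linear[OF bounded_linear.linear[OF bounded_linear_inner_left] this, of e]
    show ?thesis by (intro Linv_algebra.smooth) simp
  qed
  ultimately show ?thesis
    by (simp only:) (intro Linv_algebra_uminus Linv_algebra_sum Linv_algebra.mult Linv_algebra.entry)
qed

lemma Linv_algebra_has_derivative:
  "Linv_algebra f \<Longrightarrow> \<exists>D. (\<forall>\<xi>. (f has_derivative D \<xi>) (at \<xi>)) \<and> (\<forall>h. Linv_algebra (\<lambda>\<xi>. D \<xi> h))"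
proof (induction rule: Linv_algebra.induct)
  case (smooth f)
  then show ?case
    using smooth_on_has_derivative smooth_onD(3) Linv_algebra.smooth
    by (intro exI[of _ "\<lambda>\<xi>. frechet_derivative f (at \<xi>)"]) blast
next
  case (entry c b)
  have "((\<lambda>\<xi>. inner (Linv \<xi> c) b) has_derivative (\<lambda>d. - inner (Linv \<xi> (D2 \<xi> (Linv \<xi> c) d)) b)) (at \<xi>)"
    for \<xi>
    using bounded_linear.has_derivative[OF bounded_linear_inner_left Linv_has_derivative] by simp
  then show ?case
    using Linv_algebra_entry_derivative[of c _ b]
    by (intro exI[of _ "\<lambda>\<xi> d. - inner (Linv \<xi> (D2 \<xi> (Linv \<xi> c) d)) b"]) auto
next
  case (add f g)
  then obtain Df Dg where "\<forall>\<xi>. (f has_derivative Df \<xi>) (at \<xi>)" "\<forall>h. Linv_algebra (\<lambda>\<xi>. Df \<xi> h)"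
    "\<forall>\<xi>. (g has_derivative Dg \<xi>) (at \<xi>)" "\<forall>h. Linv_algebra (\<lambda>\<xi>. Dg \<xi> h)" by blast
  then show ?case
    by (intro exI[of _ "\<lambda>\<xi> h. Df \<xi> h + Dg \<xi> h"]) (auto intro: has_derivative_add Linv_algebra.add)
next
  case (mult f g)
  then obtain Df Dg where "\<forall>\<xi>. (f has_derivative Df \<xi>) (at \<xi>)" "\<forall>h. Linv_algebra (\<lambda>\<xi>. Df \<xi> h)"
    "\<forall>\<xi>. (g has_derivative Dg \<xi>) (at \<xi>)" "\<forall>h. Linv_algebra (\<lambda>\<xi>. Dg \<xi> h)" by blast
  with mult.hyps show ?case
    by (intro exI[of _ "\<lambda>\<xi> h. f \<xi> * Dg \<xi> h + Df \<xi> h * g \<xi>"])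
      (auto intro: has_derivative_mult intro!: Linv_algebra.add Linv_algebra.mult)
qed

lemma Linv_algebra_smooth: "Linv_algebra f \<Longrightarrow> smooth_on UNIV f"
proof (rule smooth_on_coinduct_upto[of UNIV Linv_algebra])
  fix g assume "Linv_algebra g"
  from Linv_algebra_has_derivative[OF this]
  show "\<exists>D. (\<forall>y\<in>UNIV. (g has_derivative D y) (at y)) \<and>
      (\<forall>h. \<exists>f. (Linv_algebra f \<or> smooth_on UNIV f) \<and> (\<forall>y\<in>UNIV. f y = D y h))"
    by blast
qed auto

lemma continuous_on_\<Phi>: "continuous_on UNIV \<Phi>"
  using has_derivative_continuous[OF has_derivative_L] by (simp add: continuous_at_imp_continuous_on)

lemma open_range: "open (range \<Phi>)"
  using invariance_of_domain[OF continuous_on_\<Phi> open_UNIV] inj by simp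

lemma inv_has_derivative: "(inv \<Phi> has_derivative Linv \<xi>) (at (\<Phi> \<xi>))"
  by (rule has_derivative_inverse_strong[OF open_UNIV UNIV_I continuous_on_\<Phi> _ has_derivative_L])
    (auto simp: inj L_Linv)

text \<open>The derivative of \<open>h \<circ> inv \<Phi>\<close> in direction \<open>k\<close> is \<open>H \<circ> inv \<Phi>\<close> with
  \<open>H \<xi> = Dh(\<xi>)(Linv \<xi> k)\<close>, which is smooth because the entries of \<open>Linv\<close> are.\<close>

lemma smooth_on_comp_inv:
  fixes h :: "'a \<Rightarrow> 'y::euclidean_space"
  assumes h: "smooth_on UNIV h"
  shows "smooth_on (range \<Phi>) (\<lambda>p. h (inv \<Phi> p))"
proof (rule smooth_on_coinduct_upto[OF open_range, of "\<lambda>g. \<exists>h. smooth_on UNIV h \<and> g = (\<lambda>p. h (inv \<Phi> p))"])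
  fix g :: "'a \<Rightarrow> 'y" assume "\<exists>h. smooth_on UNIV h \<and> g = (\<lambda>p. h (inv \<Phi> p))"
  then obtain h where h: "smooth_on UNIV h" and g: "g = (\<lambda>p. h (inv \<Phi> p))" by blast
  define D where "D p k = frechet_derivative h (at (inv \<Phi> p)) (Linv (inv \<Phi> p) k)" for p k
  have "(g has_derivative D p) (at p)" if "p \<in> range \<Phi>" for p
  proof -
    obtain \<xi> where p: "p = \<Phi> \<xi>" using \<open>p \<in> range \<Phi>\<close> by blast
    then have "inv \<Phi> p = \<xi>" using inj by simp
    with has_derivative_compose[OF inv_has_derivative[of \<xi>, folded p] smooth_on_has_derivative[OF h UNIV_I]]
    show ?thesis unfolding g D_def by simp
  qed
  moreover have "\<exists>f. ((\<exists>h. smooth_on UNIV h \<and> f = (\<lambda>p. h (inv \<Phi> p))) \<or> smooth_on (range \<Phi>) f) \<and>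
      (\<forall>y\<in>range \<Phi>. f y = D y k)" for k
  proof -
    define H where "H \<xi> = (\<Sum>b\<in>Basis. inner (Linv \<xi> k) b *\<^sub>R frechet_derivative h (at \<xi>) b)" for \<xi>
    have "smooth_on UNIV H"
      unfolding H_def
      by (intro smooth_on_sum smooth_on_scaleR Linv_algebra_smooth Linv_algebra.entry smooth_onD(3)[OF h] open_UNIV)
    moreover have "H (inv \<Phi> p) = D p k" for p
      unfolding H_def D_def
      by (rule linear_euclidean_expansion[OF has_derivative_linear[OF smooth_on_has_derivative[OF h UNIV_I]], symmetric])
    ultimately show ?thesis by (intro exI[of _ "\<lambda>p. H (inv \<Phi> p)"]) auto
  qed
  ultimately show "\<exists>D. (\<forall>y\<in>range \<Phi>. (g has_derivative D y) (at y)) \<and>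
      (\<forall>k. \<exists>f. ((\<exists>h. smooth_on UNIV h \<and> f = (\<lambda>p. h (inv \<Phi> p))) \<or> smooth_on (range \<Phi>) f) \<and>
        (\<forall>y\<in>range \<Phi>. f y = D y k))"
    by blast
qed (use h in blast)

end

section \<open>Faces of finitely generated cones\<close>

lemma convex_cone_sum:
  assumes S: "convex_cone S" and f: "\<And>i. i \<in> K \<Longrightarrow> f i \<in> S"
  shows "(\<Sum>i\<in>K. f i) \<in> S"
  using f
  by (induction K rule: infinite_finite_induct)
    (auto intro: convex_cone_add[OF S] convex_cone_contains_0[OF S])

lemma face_of_convex_cone:
  assumes S: "convex_cone S" and F: "F face_of S" "F \<noteq> {}"
  shows "convex_cone F"
proof -
  have FS: "F \<subseteq> S" using face_of_imp_subset[OF F(1)] .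
  have F0: "0 \<in> F"
  proof -
    obtain p where p: "p \<in> F" using F(2) by blast
    show ?thesis
    proof (cases "p = 0")
      case False
      then have "p \<in> open_segment 0 (2 *\<^sub>R p)"
        unfolding in_segment by (intro conjI exI[of _ "1/2"]) auto
      moreover have "2 *\<^sub>R p \<in> S" using convex_cone_scaleR[OF S] FS p by auto
      ultimately show ?thesis using face_ofD[OF F(1) _ convex_cone_contains_0[OF S] _ p] by blast
    qed (use p in simp)
  qed
  have "c *\<^sub>R q \<in> F" if q: "q \<in> F" and c: "c \<ge> 0" for c q
  proof (cases "c \<le> 1 \<or> q = 0")
    case True
    then show ?thesis
      using convexD[OF face_of_imp_convex[OF F(1)] F0 q, of "1 - c" c] c q by auto
  next
    case False
    then have "q \<in> open_segment 0 (c *\<^sub>R q)"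
      unfolding in_segment by (intro conjI exI[of _ "1/c"]) auto
    moreover have "c *\<^sub>R q \<in> S" using convex_cone_scaleR[OF S c] FS q by auto
    ultimately show ?thesis using face_ofD[OF F(1) _ convex_cone_contains_0[OF S]] q by blast
  qed
  then show ?thesis
    unfolding convex_cone_def conic_def using F(2) face_of_imp_convex[OF F(1)] by blast
qed

lemma face_of_convex_cone_summand:
  assumes S: "convex_cone S" and F: "F face_of S" and xy: "x \<in> S" "y \<in> S" "x + y \<in> F"
  shows "x \<in> F"
proof -
  have FC: "convex_cone F" using face_of_convex_cone[OF S F] xy(3) by blast
  have "2 *\<^sub>R x \<in> F"
  proof (cases "x = y")
    case True
    then show ?thesis using xy(3) by (simp add: scaleR_2)
  next
    case False
    then have "x + y \<in> open_segment (2 *\<^sub>R x) (2 *\<^sub>R y)"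
      unfolding in_segment by (intro conjI exI[of _ "1/2"]) (auto simp: scaleR_add_right)
    then show ?thesis using face_ofD[OF F _ _ _ xy(3)] convex_cone_scaleR[OF S] xy by auto
  qed
  from convex_cone_scaleR[OF FC _ this, of "1/2"] show ?thesis by simp
qed

lemma face_of_convex_coneI:
  assumes S: "convex_cone S" and T: "convex_cone T" "T \<subseteq> S"
    and summand: "\<And>x y. x \<in> S \<Longrightarrow> y \<in> S \<Longrightarrow> x + y \<in> T \<Longrightarrow> x \<in> T"
  shows "T face_of S"
  unfolding face_of_def
proof (intro conjI ballI impI)
  show "T \<subseteq> S" "convex T" using T by (auto simp: convex_cone_def)
  fix p q x assume p: "p \<in> S" and q: "q \<in> S" and x: "x \<in> T" and pq: "x \<in> open_segment p q"
  obtain u where u: "0 < u" "u < 1" "x = (1 - u) *\<^sub>R p + u *\<^sub>R q"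
    using pq unfolding in_segment by blast
  have pS: "(1 - u) *\<^sub>R p \<in> S" and qS: "u *\<^sub>R q \<in> S" using convex_cone_scaleR[OF S] p q u by auto
  have "(1 - u) *\<^sub>R p \<in> T" using summand[OF pS qS] u(3) x by simp
  from convex_cone_scaleR[OF T(1) _ this, of "1 / (1 - u)"] show "p \<in> T" using u by simp
  have "u *\<^sub>R q \<in> T" using summand[OF qS pS] u(3) x by (simp add: add.commute)
  from convex_cone_scaleR[OF T(1) _ this, of "1 / u"] show "q \<in> T" using u by simp
qed

lemma filterlim_nonneg_weighted_sum_at_bot:
  fixes u :: "'i \<Rightarrow> 'b \<Rightarrow> real"
  assumes K: "finite K" and s: "\<And>i. i \<in> K \<Longrightarrow> s i \<ge> 0" and i0: "i0 \<in> K" "s i0 > 0"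
    and u: "\<And>i. i \<in> K \<Longrightarrow> filterlim (u i) at_bot F"
  shows "filterlim (\<lambda>n. \<Sum>i\<in>K. s i * u i n) at_bot F"
  unfolding filterlim_at_bot
proof
  fix Z :: real
  have "eventually (\<lambda>n. s i0 * u i0 n \<le> Z) F"
    using filterlim_tendsto_pos_mult_at_bot[OF tendsto_const i0(2) u[OF i0(1)]]
    unfolding filterlim_at_bot by blast
  moreover have "eventually (\<lambda>n. \<forall>i\<in>K. u i n \<le> 0) F"
    using u K unfolding filterlim_at_bot by (intro eventually_ball_finite) auto
  ultimately show "eventually (\<lambda>n. (\<Sum>i\<in>K. s i * u i n) \<le> Z) F"
  proof eventually_elim
    case (elim n)
    have "(\<Sum>i\<in>K - {i0}. s i * u i n) \<le> 0"
      using elim(2) s by (intro sum_nonpos) (auto intro: mult_nonneg_nonpos)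
    then show ?case using elim(1) K i0(1) by (simp add: sum.remove)
  qed
qed

context
  fixes a :: "'i \<Rightarrow> 'a::euclidean_space"
begin

lemma coneC_iff: "p \<in> coneC a I \<longleftrightarrow> (\<exists>s. (\<forall>i\<in>I. s i \<ge> 0) \<and> p = (\<Sum>i\<in>I. s i *\<^sub>R a i))"
  unfolding coneC_def by blast

lemma coneC_memI: "(\<And>i. i \<in> I \<Longrightarrow> s i \<ge> 0) \<Longrightarrow> (\<Sum>i\<in>I. s i *\<^sub>R a i) \<in> coneC a I"
  unfolding coneC_def by blast

lemma convex_cone_coneC: "convex_cone (coneC a I)"
  unfolding convex_cone_iff
proof (intro conjI ballI allI impI)
  show "0 \<in> coneC a I" using coneC_memI[of I "\<lambda>_. 0"] by simp
  fix p q assume "p \<in> coneC a I" "q \<in> coneC a I"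
  then obtain s t where "\<forall>i\<in>I. s i \<ge> 0" "p = (\<Sum>i\<in>I. s i *\<^sub>R a i)"
    and "\<forall>i\<in>I. t i \<ge> 0" "q = (\<Sum>i\<in>I. t i *\<^sub>R a i)" unfolding coneC_iff by blast
  then show "p + q \<in> coneC a I"
    using coneC_memI[of I "\<lambda>i. s i + t i"] by (simp add: scaleR_add_left sum.distrib)
next
  fix p and c :: real assume "p \<in> coneC a I" "c \<ge> 0"
  then obtain s where "\<forall>i\<in>I. s i \<ge> 0" "p = (\<Sum>i\<in>I. s i *\<^sub>R a i)" unfolding coneC_iff by blast
  with \<open>c \<ge> 0\<close> show "c *\<^sub>R p \<in> coneC a I"
    using coneC_memI[of I "\<lambda>i. c * s i"] by (simp add: scaleR_sum_right)
qed

lemma sum_delta_scaleR: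
  assumes "finite I" "i \<in> I"
  shows "(\<Sum>j\<in>I. (if j = i then 1 else 0) *\<^sub>R a j) = a i"
proof -
  have "(\<Sum>j\<in>I. (if j = i then 1 else 0) *\<^sub>R a j) = (\<Sum>j\<in>I. if j = i then a j else 0)"
    by (rule sum.cong) auto
  then show ?thesis using assms by (simp add: sum.delta')
qed

lemma generator_in_coneC: "finite I \<Longrightarrow> i \<in> I \<Longrightarrow> a i \<in> coneC a I"
  using coneC_memI[of I "\<lambda>j. if j = i then 1 else 0"] sum_delta_scaleR by simp

lemma coneC_eq_convex_cone_hull:
  assumes I: "finite I"
  shows "coneC a I = convex_cone hull (a ` I)"
proof
  show "coneC a I \<subseteq> convex_cone hull (a ` I)"
    unfolding coneC_def
    by (clarify, rule convex_cone_sum[OF convex_cone_convex_cone_hull]) (auto intro!: convex_cone_hull_mul intro: hull_inc)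
  show "convex_cone hull (a ` I) \<subseteq> coneC a I"
    by (rule hull_minimal) (auto intro: convex_cone_coneC generator_in_coneC[OF I])
qed

lemma coneC_mono: "finite I \<Longrightarrow> J \<subseteq> I \<Longrightarrow> coneC a J \<subseteq> coneC a I"
  by (simp add: coneC_eq_convex_cone_hull finite_subset hull_mono image_mono)

lemma face_of_coneC_eq:
  assumes I: "finite I" and F: "F face_of coneC a I" "F \<noteq> {}"
  shows "F = coneC a {i\<in>I. a i \<in> F}"
proof
  have FC: "convex_cone F" by (rule face_of_convex_cone[OF convex_cone_coneC F])
  have fin: "finite {i\<in>I. a i \<in> F}" using I by simp
  show "coneC a {i\<in>I. a i \<in> F} \<subseteq> F"
    unfolding coneC_eq_convex_cone_hull[OF fin] by (intro hull_minimal FC) blast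
  show "F \<subseteq> coneC a {i\<in>I. a i \<in> F}"
  proof
    fix p assume p: "p \<in> F"
    then have "p \<in> coneC a I" using face_of_imp_subset[OF F(1)] by blast
    then obtain s where s: "\<forall>i\<in>I. s i \<ge> 0" "p = (\<Sum>i\<in>I. s i *\<^sub>R a i)"
      unfolding coneC_iff by blast
    have pos: "a i \<in> F" if i: "i \<in> I" "s i > 0" for i
    proof -
      have "s i *\<^sub>R a i \<in> F"
      proof (rule face_of_convex_cone_summand[OF convex_cone_coneC F(1)])
        show "s i *\<^sub>R a i \<in> coneC a I"
          using convex_cone_scaleR[OF convex_cone_coneC _ generator_in_coneC[OF I i(1)]] i(2) by simp
        show "(\<Sum>j\<in>I - {i}. s j *\<^sub>R a j) \<in> coneC a I"
          using coneC_mono[OF I, of "I - {i}"] coneC_memI[of "I - {i}" s] s(1) by auto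
        show "s i *\<^sub>R a i + (\<Sum>j\<in>I - {i}. s j *\<^sub>R a j) \<in> F"
          using p I i unfolding s(2) by (simp add: sum.remove)
      qed
      from convex_cone_scaleR[OF FC _ this, of "1 / s i"] show ?thesis using i by simp
    qed
    have "p = (\<Sum>i\<in>{i\<in>I. a i \<in> F}. s i *\<^sub>R a i)"
      unfolding s(2) using I s(1) pos by (intro sum.mono_neutral_right) (auto simp: less_le)
    then show "p \<in> coneC a {i\<in>I. a i \<in> F}" using s(1) by (auto intro!: coneC_memI)
  qed
qed

lemma face_of_coneC_exposed:
  assumes I: "finite I" and F: "F face_of coneC a I" "F \<noteq> {}"
  obtains \<eta> where "\<And>i. i \<in> I \<Longrightarrow> inner (a i) \<eta> \<le> 0" "\<And>i. i \<in> I \<Longrightarrow> inner (a i) \<eta> = 0 \<longleftrightarrow> a i \<in> F"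
proof -
  have "polyhedron (coneC a I)"
    unfolding coneC_eq_convex_cone_hull[OF I] using I by (simp add: polyhedron_convex_cone_hull)
  then have "F exposed_face_of coneC a I" using exposed_face_of_polyhedron F(1) by blast
  then obtain u b where u: "coneC a I \<subseteq> {x. u \<bullet> x \<le> b}" "F = coneC a I \<inter> {x. u \<bullet> x = b}"
    unfolding exposed_face_of_def by blast
  have "0 \<in> F" using convex_cone_contains_0[OF face_of_convex_cone[OF convex_cone_coneC F]] .
  then have "b = 0" using u(2) by simp
  then show ?thesis
    using that[of u] u generator_in_coneC[OF I] by (force simp: inner_commute)
qed

lemma set_sum_scaleR_images:
  assumes "finite J"
  shows "(\<Sum>i\<in>J. (\<lambda>t. t *\<^sub>R a i) ` T) = {\<Sum>i\<in>J. s i *\<^sub>R a i | s. \<forall>i\<in>J. s i \<in> T}"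
  using assms
proof (induction J rule: finite_induct)
  case (insert j J)
  show ?case
  proof (intro set_eqI iffI)
    fix p assume "p \<in> (\<Sum>i\<in>insert j J. (\<lambda>t. t *\<^sub>R a i) ` T)"
    then obtain t s where t: "t \<in> T" and s: "\<forall>i\<in>J. s i \<in> T" and p: "p = t *\<^sub>R a j + (\<Sum>i\<in>J. s i *\<^sub>R a i)"
      using insert by (auto simp: set_plus_def)
    have "(\<Sum>i\<in>J. (s(j := t)) i *\<^sub>R a i) = (\<Sum>i\<in>J. s i *\<^sub>R a i)"
      using insert.hyps(2) by (intro sum.cong) auto
    then show "p \<in> {\<Sum>i\<in>insert j J. s i *\<^sub>R a i | s. \<forall>i\<in>insert j J. s i \<in> T}"
      using insert.hyps t s p by (intro CollectI exI[of _ "s(j := t)"]) auto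
  next
    fix p assume "p \<in> {\<Sum>i\<in>insert j J. s i *\<^sub>R a i | s. \<forall>i\<in>insert j J. s i \<in> T}"
    then obtain s where s: "\<forall>i\<in>insert j J. s i \<in> T" "p = s j *\<^sub>R a j + (\<Sum>i\<in>J. s i *\<^sub>R a i)"
      using insert.hyps by auto
    then show "p \<in> (\<Sum>i\<in>insert j J. (\<lambda>t. t *\<^sub>R a i) ` T)"
      using insert by (auto simp: set_plus_def)
  qed
qed simp

lemma rel_interior_coneC:
  assumes J: "finite J"
  shows "rel_interior (coneC a J) = {\<Sum>i\<in>J. s i *\<^sub>R a i | s. \<forall>i\<in>J. s i > 0}"
proof -
  have lin: "linear (\<lambda>t. t *\<^sub>R a i)" for i
    by (simp add: bounded_linear_scaleR_left bounded_linear.linear)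
  have "rel_interior ((\<lambda>t. t *\<^sub>R a i) ` {0..}) = (\<lambda>t. t *\<^sub>R a i) ` {0<..}" for i
    using rel_interior_convex_linear_image[OF lin, of "{0..}"] by (simp add: rel_interior_nonempty_interior)
  moreover have "coneC a J = (\<Sum>i\<in>J. (\<lambda>t. t *\<^sub>R a i) ` {0..})"
    unfolding set_sum_scaleR_images[OF J] coneC_def by simp
  ultimately show ?thesis
    using rel_interior_sum_gen[of J "\<lambda>i. (\<lambda>t. t *\<^sub>R a i) ` {0..}"]
    by (simp add: convex_linear_image[OF lin] set_sum_scaleR_images[OF J])
qed

lemma coneC_face_of_coneC:
  assumes I: "finite I" and JI: "J \<subseteq> I"
    and vanish: "\<And>s. \<forall>i\<in>I. s i \<ge> 0 \<Longrightarrow> (\<Sum>i\<in>I. s i *\<^sub>R a i) \<in> coneC a J \<Longrightarrow> \<forall>i\<in>I - J. s i = 0"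
  shows "coneC a J face_of coneC a I"
proof (rule face_of_convex_coneI[OF convex_cone_coneC convex_cone_coneC coneC_mono[OF I JI]])
  fix p q assume "p \<in> coneC a I" "q \<in> coneC a I" and pq: "p + q \<in> coneC a J"
  then obtain s t where s: "\<forall>i\<in>I. s i \<ge> 0" "p = (\<Sum>i\<in>I. s i *\<^sub>R a i)"
    and t: "\<forall>i\<in>I. t i \<ge> 0" "q = (\<Sum>i\<in>I. t i *\<^sub>R a i)"
    unfolding coneC_iff by blast
  have "p + q = (\<Sum>i\<in>I. (s i + t i) *\<^sub>R a i)"
    unfolding s(2) t(2) scaleR_add_left sum.distrib ..
  with pq have "\<forall>i\<in>I - J. s i + t i = 0"
    using s(1) t(1) by (intro vanish) auto
  then have "\<forall>i\<in>I - J. s i = 0" using s(1) t(1) by (simp add: add_nonneg_eq_0_iff)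
  then have "p = (\<Sum>i\<in>J. s i *\<^sub>R a i)" unfolding s(2) by (intro sum.mono_neutral_right I JI) auto
  then show "p \<in> coneC a J" using s(1) JI by (auto intro!: coneC_memI)
qed

lemma coneC_generators:
  assumes I: "finite I" and JI: "J \<subseteq> I"
    and vanish: "\<And>s. \<forall>i\<in>I. s i \<ge> 0 \<Longrightarrow> (\<Sum>i\<in>I. s i *\<^sub>R a i) \<in> coneC a J \<Longrightarrow> \<forall>i\<in>I - J. s i = 0"
  shows "{i\<in>I. a i \<in> coneC a J} = J"
proof (intro set_eqI iffI)
  fix i assume "i \<in> {i\<in>I. a i \<in> coneC a J}"
  then have i: "i \<in> I" "(\<Sum>j\<in>I. (if j = i then 1 else 0) *\<^sub>R a j) \<in> coneC a J"
    using sum_delta_scaleR[OF I] by auto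
  from vanish[OF _ i(2)] i(1) show "i \<in> J" by force
qed (use JI generator_in_coneC finite_subset[OF JI I] in auto)

text \<open>Pairing \<open>\<Sum>\<^bsub>i\<in>I\<^esub> s i *\<^sub>R a i = \<Sum>\<^bsub>i\<in>J\<^esub> t i *\<^sub>R a i\<close> with \<open>\<xi> n\<close> leaves a convergent
  right-hand side, while the terms indexed by \<open>I - J\<close> drive the left-hand side to \<open>-\<infinity>\<close>
  unless \<open>s\<close> vanishes there.\<close>

lemma coneC_vanish_if_divergent:
  assumes I: "finite I" and JI: "J \<subseteq> I"
    and conv: "\<And>i. i \<in> J \<Longrightarrow> convergent (\<lambda>n. inner (a i) (\<xi> n))"
    and div: "\<And>i. i \<in> I - J \<Longrightarrow> filterlim (\<lambda>n. inner (a i) (\<xi> n)) at_bot sequentially"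
    and s: "\<forall>i\<in>I. s i \<ge> 0" and sJ: "(\<Sum>i\<in>I. s i *\<^sub>R a i) \<in> coneC a J"
  shows "\<forall>i\<in>I - J. s i = 0"
proof (rule ccontr)
  assume "\<not> (\<forall>i\<in>I - J. s i = 0)"
  then obtain i0 where i0: "i0 \<in> I - J" "s i0 > 0" using s by force
  obtain t where t: "(\<Sum>i\<in>I. s i *\<^sub>R a i) = (\<Sum>i\<in>J. t i *\<^sub>R a i)"
    using sJ unfolding coneC_iff by blast
  define u where "u i n = inner (a i) (\<xi> n)" for i n
  have eq: "(\<Sum>i\<in>I - J. s i * u i n) = (\<Sum>i\<in>J. (t i - s i) * u i n)" for n
  proof -
    have "(\<Sum>i\<in>I. s i * u i n) = (\<Sum>i\<in>J. t i * u i n)"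
      using arg_cong[OF t, of "\<lambda>x. inner x (\<xi> n)"] by (simp add: u_def inner_sum_left)
    moreover have "(\<Sum>i\<in>I. s i * u i n) = (\<Sum>i\<in>J. s i * u i n) + (\<Sum>i\<in>I - J. s i * u i n)"
      using I JI by (simp add: sum.subset_diff[of J I])
    ultimately show ?thesis by (simp add: left_diff_distrib sum_subtractf)
  qed
  obtain L where L: "\<And>i. i \<in> J \<Longrightarrow> (u i \<longlongrightarrow> L i) sequentially"
    using conv unfolding convergent_def u_def by metis
  have "((\<lambda>n. \<Sum>i\<in>I - J. s i * u i n) \<longlongrightarrow> (\<Sum>i\<in>J. (t i - s i) * L i)) sequentially"
    unfolding eq by (intro tendsto_sum tendsto_mult_left L)
  moreover have "filterlim (\<lambda>n. \<Sum>i\<in>I - J. s i * u i n) at_bot sequentially"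
    using I s i0 div unfolding u_def by (intro filterlim_nonneg_weighted_sum_at_bot) auto
  ultimately show False by (auto intro: filterlim_at_bot_nhds)
qed

end

section \<open>An exponential moment map\<close>

lemma square_le_exp_double: "(u::real) \<ge> 0 \<Longrightarrow> u\<^sup>2 \<le> exp (2 * u)"
proof -
  assume u: "u \<ge> 0"
  have "(1 + u) * (1 + u) \<le> exp u * exp u" using u by (intro mult_mono) auto
  then show ?thesis using u by (simp add: power2_eq_square algebra_simps exp_add[symmetric])
qed

lemma exp_potential_term_lower_bound:
  fixes w s u :: real
  assumes w: "w > 0" and s: "s > 0"
  shows "- (s\<^sup>2 / (2 * w)) \<le> w * exp (2 * u) / 2 - s * u"
proof (cases "u \<ge> 0")
  case True
  have "w * u\<^sup>2 / 2 \<le> w * exp (2 * u) / 2" using square_le_exp_double[OF True] w by simp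
  moreover have "w * u\<^sup>2 / 2 - s * u + s\<^sup>2 / (2 * w) = (w / 2) * (u - s / w)\<^sup>2"
    using w by (simp add: power2_eq_square field_simps)
  moreover have "(w / 2) * (u - s / w)\<^sup>2 \<ge> 0" using w by simp
  ultimately show ?thesis by linarith
next
  case False
  then have "s * u \<le> 0" using s by (simp add: mult_nonneg_nonpos)
  moreover have "w * exp (2 * u) / 2 > 0" "s\<^sup>2 / (2 * w) \<ge> 0" using w by auto
  ultimately show ?thesis by linarith
qed

lemma exp_potential_term_bounded_arg:
  fixes w s u R :: real
  assumes w: "w > 0" and s: "s > 0" and f: "w * exp (2 * u) / 2 - s * u \<le> R"
  shows "\<bar>u\<bar> \<le> 1 + 4 * s / w + 4 * \<bar>R\<bar> / w + \<bar>R\<bar> / s"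
proof -
  have nn: "0 \<le> 4 * s / w" "0 \<le> 4 * \<bar>R\<bar> / w" "0 \<le> \<bar>R\<bar> / s" using s w by auto
  consider "u < 0" | "0 \<le> u" "u \<le> 1 \<or> u \<le> 4 * s / w" | "u > 1" "u > 4 * s / w" by linarith
  then show ?thesis
  proof cases
    case 1
    have "w * exp (2 * u) / 2 > 0" using w by simp
    then have "s * (- u) \<le> \<bar>R\<bar>" using f by linarith
    then have "- u \<le> \<bar>R\<bar> / s" using s by (simp add: pos_le_divide_eq mult.commute)
    then show ?thesis using 1 nn by linarith
  next
    case 2
    then show ?thesis using nn by auto
  next
    case 3
    have "w * u\<^sup>2 / 2 \<le> w * exp (2 * u) / 2" using square_le_exp_double[of u] 3 w by simp
    then have q: "w * u\<^sup>2 / 2 - s * u \<le> R" using f by linarith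
    have "w * u > 4 * s" using 3 w by (simp add: pos_divide_less_eq mult.commute)
    then have "w * u / 4 \<le> w * u / 2 - s" by linarith
    then have "u * (w * u / 4) \<le> u * (w * u / 2 - s)" using 3 by (intro mult_left_mono) auto
    moreover have "1 * (w * u / 4) \<le> u * (w * u / 4)" using 3 w by (intro mult_right_mono) auto
    moreover have "u * (w * u / 2 - s) = w * u\<^sup>2 / 2 - s * u" by (simp add: power2_eq_square algebra_simps)
    ultimately have "w * u / 4 \<le> \<bar>R\<bar>" using q by linarith
    then have "u \<le> 4 * \<bar>R\<bar> / w" using w by (simp add: pos_le_divide_eq mult.commute)
    then show ?thesis using 3 nn by linarith
  qed
qed

lemma exp_double_diff_mult_nonneg: "0 \<le> (exp (2 * u) - exp (2 * u')) * (u - (u'::real))"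
  by (cases "u \<le> u'") (auto intro: mult_nonpos_nonpos)

lemma exp_double_diff_mult_eq_0_iff: "(exp (2 * u) - exp (2 * u')) * (u - u') = 0 \<longleftrightarrow> u = (u'::real)"
  by auto

lemma inner_span_eq_0:
  "u \<in> span S \<Longrightarrow> (\<And>y. y \<in> S \<Longrightarrow> inner z y = 0) \<Longrightarrow> inner z u = 0"
  using orthogonal_to_span[of u S z] by (auto simp: orthogonal_def)

lemma span_eq_0_if_orthogonal_generators:
  "\<xi> \<in> span S \<Longrightarrow> (\<And>y. y \<in> S \<Longrightarrow> inner \<xi> y = 0) \<Longrightarrow> \<xi> = 0"
  using inner_span_eq_0[of \<xi> S \<xi>] by simp

lemma bounded_span_inner_le:
  fixes a :: "'i \<Rightarrow> 'a::euclidean_space"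
  assumes J: "finite J"
  shows "bounded {\<xi> \<in> span (a ` J). \<forall>i\<in>J. \<bar>inner (a i) \<xi>\<bar> \<le> C}"
proof -
  define T where "T \<xi> = (\<Sum>i\<in>J. inner (a i) \<xi> *\<^sub>R a i)" for \<xi>
  have "linear T" unfolding T_def
    by (intro linear_compose_sum) (auto simp: linear_iff inner_add_right scaleR_add_left)
  moreover have "\<xi> = 0" if "\<xi> \<in> span (a ` J)" "T \<xi> = 0" for \<xi>
  proof -
    have "(\<Sum>i\<in>J. (inner (a i) \<xi>)\<^sup>2) = inner (T \<xi>) \<xi>"
      unfolding T_def by (simp add: inner_sum_left power2_eq_square)
    then have "\<forall>i\<in>J. inner (a i) \<xi> = 0"
      using that(2) sum_nonneg_eq_0_iff[OF J, of "\<lambda>i. (inner (a i) \<xi>)\<^sup>2"] by simp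
    then show ?thesis by (intro span_eq_0_if_orthogonal_generators[OF that(1)]) (auto simp: inner_commute)
  qed
  ultimately obtain e where e: "e > 0" "\<And>\<xi>. \<xi> \<in> span (a ` J) \<Longrightarrow> e * norm \<xi> \<le> norm (T \<xi>)"
    using injective_imp_isometric[OF closed_span subspace_span] by (metis linear_conv_bounded_linear)
  have "norm \<xi> \<le> (\<Sum>i\<in>J. C * norm (a i)) / e"
    if "\<xi> \<in> span (a ` J)" "\<forall>i\<in>J. \<bar>inner (a i) \<xi>\<bar> \<le> C" for \<xi>
  proof -
    have "norm (T \<xi>) \<le> (\<Sum>i\<in>J. \<bar>inner (a i) \<xi>\<bar> * norm (a i))"
      unfolding T_def using norm_sum[of "\<lambda>i. inner (a i) \<xi> *\<^sub>R a i" J] by simp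
    also have "\<dots> \<le> (\<Sum>i\<in>J. C * norm (a i))"
      using that(2) by (intro sum_mono mult_right_mono) auto
    finally have "e * norm \<xi> \<le> (\<Sum>i\<in>J. C * norm (a i))" using e(2)[OF that(1)] by linarith
    then show ?thesis using e(1) by (simp add: pos_le_divide_eq mult.commute)
  qed
  then show ?thesis unfolding bounded_iff by blast
qed

definition exp_moment :: "'i set \<Rightarrow> ('i \<Rightarrow> real) \<Rightarrow> ('i \<Rightarrow> 'a::real_inner) \<Rightarrow> 'a \<Rightarrow> 'a" where
  "exp_moment J w a \<xi> = (\<Sum>i\<in>J. (w i * exp (2 * inner (a i) \<xi>)) *\<^sub>R a i)"

text \<open>\<open>exp_moment J w a\<close> is the gradient of the convex function \<open>\<xi> \<mapsto> \<Sum>\<^bsub>i\<in>J\<^esub> w i e\<^bsup>2\<langle>a i, \<xi>\<rangle>\<^esup> / 2\<close>;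
  pairing the difference of two values with \<open>\<xi> - \<eta>\<close> gives a sum of nonnegative terms.\<close>

lemma exp_moment_eq_iff:
  assumes J: "finite J" and w: "\<forall>i\<in>J. w i > 0"
  shows "exp_moment J w a \<xi> = exp_moment J w a \<eta> \<longleftrightarrow> (\<forall>i\<in>J. inner (a i) \<xi> = inner (a i) \<eta>)"
proof
  assume eq: "exp_moment J w a \<xi> = exp_moment J w a \<eta>"
  define t where "t i = w i * ((exp (2 * inner (a i) \<xi>) - exp (2 * inner (a i) \<eta>)) * (inner (a i) \<xi> - inner (a i) \<eta>))"
    for i
  have ip: "inner (exp_moment J w a \<zeta>) (\<xi> - \<eta>) =
      (\<Sum>i\<in>J. w i * exp (2 * inner (a i) \<zeta>) * (inner (a i) \<xi> - inner (a i) \<eta>))" for \<zeta>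
    unfolding exp_moment_def by (simp add: inner_sum_left inner_diff_right right_diff_distrib sum_subtractf)
  have "(\<Sum>i\<in>J. t i) = inner (exp_moment J w a \<xi> - exp_moment J w a \<eta>) (\<xi> - \<eta>)"
    unfolding inner_diff_left ip sum_subtractf[symmetric] t_def by (rule sum.cong) (auto simp: algebra_simps)
  then have "(\<Sum>i\<in>J. t i) = 0" using eq by simp
  moreover have "t i \<ge> 0" if "i \<in> J" for i
    unfolding t_def using w that exp_double_diff_mult_nonneg by (simp add: less_imp_le)
  ultimately have "\<forall>i\<in>J. t i = 0" using sum_nonneg_eq_0_iff[OF J] by blast
  then show "\<forall>i\<in>J. inner (a i) \<xi> = inner (a i) \<eta>"
    using w exp_double_diff_mult_eq_0_iff unfolding t_def by fastforce
qed (auto simp: exp_moment_def intro: sum.cong)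

definition exp_potential ::
    "'i set \<Rightarrow> ('i \<Rightarrow> real) \<Rightarrow> ('i \<Rightarrow> real) \<Rightarrow> ('i \<Rightarrow> 'a::real_inner) \<Rightarrow> 'a \<Rightarrow> real" where
  "exp_potential J w s a \<xi> = (\<Sum>i\<in>J. w i * exp (2 * inner (a i) \<xi>) / 2 - s i * inner (a i) \<xi>)"

lemma continuous_on_exp_potential: "continuous_on A (exp_potential J w s a)"
  unfolding exp_potential_def by (intro continuous_intros) auto

lemma exp_potential_sublevel_bounded:
  fixes a :: "'i \<Rightarrow> 'a::euclidean_space"
  assumes J: "finite J" and w: "\<forall>i\<in>J. w i > 0" and s: "\<forall>i\<in>J. s i > 0"
  shows "bounded {\<xi> \<in> span (a ` J). exp_potential J w s a \<xi> \<le> R}"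
proof -
  define R' where "R' = R + (\<Sum>i\<in>J. (s i)\<^sup>2 / (2 * w i))"
  define C where "C = (\<Sum>i\<in>J. 1 + 4 * s i / w i + 4 * \<bar>R'\<bar> / w i + \<bar>R'\<bar> / s i)"
  have bound: "\<bar>inner (a i) \<xi>\<bar> \<le> C" if \<xi>: "exp_potential J w s a \<xi> \<le> R" and i: "i \<in> J" for \<xi> i
  proof -
    have "exp_potential J w s a \<xi> = (w i * exp (2 * inner (a i) \<xi>) / 2 - s i * inner (a i) \<xi>) +
        (\<Sum>j\<in>J - {i}. w j * exp (2 * inner (a j) \<xi>) / 2 - s j * inner (a j) \<xi>)"
      unfolding exp_potential_def using J i by (simp add: sum.remove)
    moreover have "(\<Sum>j\<in>J - {i}. - ((s j)\<^sup>2 / (2 * w j))) \<le>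
        (\<Sum>j\<in>J - {i}. w j * exp (2 * inner (a j) \<xi>) / 2 - s j * inner (a j) \<xi>)"
      using w s by (intro sum_mono exp_potential_term_lower_bound) auto
    moreover have "(\<Sum>j\<in>J - {i}. (s j)\<^sup>2 / (2 * w j)) \<le> (\<Sum>j\<in>J. (s j)\<^sup>2 / (2 * w j))"
      using J w by (intro sum_mono2) auto
    ultimately have "w i * exp (2 * inner (a i) \<xi>) / 2 - s i * inner (a i) \<xi> \<le> R'"
      using \<xi> unfolding R'_def by (simp add: sum_negf)
    then have "\<bar>inner (a i) \<xi>\<bar> \<le> 1 + 4 * s i / w i + 4 * \<bar>R'\<bar> / w i + \<bar>R'\<bar> / s i"
      using w s i by (intro exp_potential_term_bounded_arg) auto
    also have "\<dots> \<le> C"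
      unfolding C_def using J i w s by (intro member_le_sum) (auto intro!: add_nonneg_nonneg simp: less_imp_le)
    finally show ?thesis .
  qed
  show ?thesis
    by (rule bounded_subset[OF bounded_span_inner_le[OF J, of a C]]) (use bound in auto)
qed

lemma exp_potential_line_derivative:
  "((\<lambda>t. exp_potential J w s a (\<xi> + t *\<^sub>R g)) has_real_derivative
      inner (exp_moment J w a \<xi> - (\<Sum>i\<in>J. s i *\<^sub>R a i)) g) (at 0)"
proof -
  have "((\<lambda>t. exp_potential J w s a (\<xi> + t *\<^sub>R g)) has_real_derivative
      (\<Sum>i\<in>J. w i * exp (2 * (inner (a i) \<xi> + 0 * inner (a i) g)) * (2 * inner (a i) g) / 2 - s i * inner (a i) g))
      (at 0)"
    unfolding exp_potential_def inner_add_right inner_scaleR_right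
    by (intro DERIV_sum) (auto intro!: derivative_eq_intros)
  moreover have "(\<Sum>i\<in>J. w i * exp (2 * (inner (a i) \<xi> + 0 * inner (a i) g)) * (2 * inner (a i) g) / 2 - s i * inner (a i) g)
      = inner (exp_moment J w a \<xi> - (\<Sum>i\<in>J. s i *\<^sub>R a i)) g"
    unfolding exp_moment_def inner_diff_left inner_sum_left sum_subtractf[symmetric]
    by (rule sum.cong) auto
  ultimately show ?thesis by simp
qed

text \<open>A minimiser of \<open>exp_potential J w s a\<close> on \<open>span (a ` J)\<close> (which exists by coercivity) is a critical
  point in the directions of that span, and the gradient itself lies in it.\<close>

lemma exp_moment_surj:
  fixes a :: "'i \<Rightarrow> 'a::euclidean_space"
  assumes J: "finite J" and w: "\<forall>i\<in>J. w i > 0" and s: "\<forall>i\<in>J. s i > 0"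
  obtains \<xi> where "exp_moment J w a \<xi> = (\<Sum>i\<in>J. s i *\<^sub>R a i)"
proof -
  let ?\<phi> = "exp_potential J w s a"
  define K where "K = {\<xi> \<in> span (a ` J). ?\<phi> \<xi> \<le> ?\<phi> 0}"
  have cK: "compact K"
    unfolding compact_eq_bounded_closed
  proof
    show "bounded K" unfolding K_def by (rule exp_potential_sublevel_bounded[OF J w s])
    have "K = span (a ` J) \<inter> {\<xi>. ?\<phi> \<xi> \<le> ?\<phi> 0}" unfolding K_def by auto
    then show "closed K"
      by (simp only:) (intro closed_Int closed_span closed_Collect_le continuous_on_exp_potential continuous_on_const)
  qed
  have K0: "0 \<in> K" unfolding K_def by (simp add: span_zero)
  have "\<exists>\<xi>0\<in>K. \<forall>y\<in>K. ?\<phi> \<xi>0 \<le> ?\<phi> y"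
    using K0 by (intro continuous_attains_inf[OF cK _ continuous_on_exp_potential]) auto
  then obtain \<xi>0 where \<xi>0: "\<xi>0 \<in> K" "\<And>y. y \<in> K \<Longrightarrow> ?\<phi> \<xi>0 \<le> ?\<phi> y" by blast
  have min: "?\<phi> \<xi>0 \<le> ?\<phi> y" if "y \<in> span (a ` J)" for y
    using \<xi>0 K0 that unfolding K_def by (cases "?\<phi> y \<le> ?\<phi> 0") force+
  define g where "g = exp_moment J w a \<xi>0 - (\<Sum>i\<in>J. s i *\<^sub>R a i)"
  have "g \<in> span (a ` J)"
    unfolding g_def exp_moment_def by (intro span_diff span_sum span_scale span_base) auto
  moreover have "\<xi>0 \<in> span (a ` J)" using \<xi>0(1) unfolding K_def by blast
  ultimately have "\<forall>t. \<bar>0 - t\<bar> < 1 \<longrightarrow> ?\<phi> (\<xi>0 + 0 *\<^sub>R g) \<le> ?\<phi> (\<xi>0 + t *\<^sub>R g)"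
    by (auto intro!: min span_add span_scale)
  then have "inner g g = 0"
    by (intro DERIV_local_min[OF exp_potential_line_derivative[of J w s a \<xi>0 g, folded g_def]]) auto
  then show ?thesis using that unfolding g_def by simp
qed

lemma range_exp_moment:
  fixes a :: "'i \<Rightarrow> 'a::euclidean_space"
  assumes J: "finite J" and w: "\<forall>i\<in>J. w i > 0"
  shows "range (exp_moment J w a) = rel_interior (coneC a J)"
  unfolding rel_interior_coneC[OF J]
proof (intro set_eqI iffI)
  fix p assume "p \<in> range (exp_moment J w a)"
  then show "p \<in> {\<Sum>i\<in>J. s i *\<^sub>R a i | s. \<forall>i\<in>J. s i > 0}"
    using w unfolding exp_moment_def by fastforce
next
  fix p assume "p \<in> {\<Sum>i\<in>J. s i *\<^sub>R a i | s. \<forall>i\<in>J. s i > 0}"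
  then obtain s where s: "\<forall>i\<in>J. s i > 0" "p = (\<Sum>i\<in>J. s i *\<^sub>R a i)" by blast
  obtain \<xi> where "exp_moment J w a \<xi> = (\<Sum>i\<in>J. s i *\<^sub>R a i)" by (rule exp_moment_surj[OF J w s(1)])
  then show "p \<in> range (exp_moment J w a)" unfolding s(2) by (rule range_eqI[OF sym])
qed

lemma span_image_eq_0_if_orthogonal:
  "\<xi> \<in> span (a ` J) \<Longrightarrow> \<forall>i\<in>J. inner (a i) \<xi> = 0 \<Longrightarrow> \<xi> = 0"
  by (rule span_eq_0_if_orthogonal_generators) (auto simp: inner_commute)

lemma orthogonal_projection_exists:
  fixes W :: "'a::euclidean_space set"
  assumes W: "subspace W"
  obtains P where "linear P" "\<And>\<xi>. P \<xi> \<in> W" "\<And>\<xi> u. u \<in> W \<Longrightarrow> inner (\<xi> - P \<xi>) u = 0"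
proof -
  obtain B where B: "B \<subseteq> W" "pairwise orthogonal B" "\<And>x. x \<in> B \<Longrightarrow> norm x = 1" "independent B" "span B = W"
    using orthonormal_basis_subspace[OF W] by metis
  have finB: "finite B" using B(4) independent_imp_finite by blast
  have Bon: "inner b b' = (if b = b' then 1 else 0)" if "b \<in> B" "b' \<in> B" for b b'
    using B(2,3) that by (auto simp: pairwise_def orthogonal_def norm_eq_1)
  define P where "P \<xi> = (\<Sum>b\<in>B. inner \<xi> b *\<^sub>R b)" for \<xi>
  show ?thesis
  proof
    show "linear P" unfolding P_def
      by (intro linear_compose_sum) (auto simp: linear_iff inner_add_left scaleR_add_left)
    show "P \<xi> \<in> W" for \<xi>
      unfolding P_def B(5)[symmetric] by (intro span_sum span_scale span_base)
    have "inner (\<xi> - P \<xi>) b' = 0" if "b' \<in> B" for \<xi> b'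
    proof -
      have "inner (P \<xi>) b' = (\<Sum>b\<in>B. inner \<xi> b * (if b = b' then 1 else 0))"
        unfolding P_def by (simp add: inner_sum_left Bon that)
      also have "\<dots> = inner \<xi> b'" using finB that by (simp add: if_distrib sum.delta' cong: if_cong)
      finally show ?thesis by (simp add: inner_diff_left)
    qed
    then show "inner (\<xi> - P \<xi>) u = 0" if "u \<in> W" for \<xi> u
      using inner_span_eq_0[of u B] that B(5) by blast
  qed
qed

text \<open>\<open>exp_moment J w a\<close> only depends on the projection of its argument to \<open>span (a ` J)\<close>;
  adding the complementary component makes it an injective immersion of the whole space, whose
  inverse is then smooth.\<close>

locale exp_moment_extension =
  fixes J :: "'i set" and w :: "'i \<Rightarrow> real" and a :: "'i \<Rightarrow> 'a::euclidean_space" and P :: "'a \<Rightarrow> 'a"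
  assumes finite_J: "finite J" and w_pos: "\<forall>i\<in>J. w i > 0"
    and linear_P: "linear P" and P_in_span: "\<And>\<xi>. P \<xi> \<in> span (a ` J)"
    and P_orthogonal: "\<And>\<xi> u. u \<in> span (a ` J) \<Longrightarrow> inner (\<xi> - P \<xi>) u = 0"
begin

definition \<Phi> :: "'a \<Rightarrow> 'a" where "\<Phi> \<xi> = exp_moment J w a \<xi> + (\<xi> - P \<xi>)"

lemma exp_moment_in_span: "exp_moment J w a \<xi> \<in> span (a ` J)"
  unfolding exp_moment_def by (intro span_sum span_scale span_base) auto

lemma inner_P: "i \<in> J \<Longrightarrow> inner (a i) (P \<xi>) = inner (a i) \<xi>"
  using P_orthogonal[of "a i" \<xi>] by (simp add: span_base inner_diff_left inner_commute[of "a i"])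

lemma P_id: "u \<in> span (a ` J) \<Longrightarrow> P u = u"
  using P_orthogonal[of "u - P u" u] span_diff[OF _ P_in_span] by simp

lemma exp_moment_P: "exp_moment J w a (P \<xi>) = exp_moment J w a \<xi>"
  unfolding exp_moment_def by (rule sum.cong) (simp_all add: inner_P)

lemma \<Phi>_P: "\<Phi> (P \<xi>) = exp_moment J w a \<xi>"
  unfolding \<Phi>_def exp_moment_P P_id[OF P_in_span] by simp

lemma \<Phi>_has_derivative:
  "(\<Phi> has_derivative (\<lambda>d. (\<Sum>i\<in>J. (w i * (exp (2 * inner (a i) \<xi>) * (2 * inner (a i) d))) *\<^sub>R a i) + (d - P d)))
     (at \<xi>)"
proof -
  have "((\<lambda>\<xi>. \<xi> - P \<xi>) has_derivative (\<lambda>d. d - P d)) (at \<xi>)"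
    using linear_P by (intro has_derivative_diff has_derivative_ident bounded_linear_imp_has_derivative)
      (simp add: linear_conv_bounded_linear)
  then show ?thesis
    unfolding \<Phi>_def[abs_def] exp_moment_def
    by (intro has_derivative_add has_derivative_sum) (auto intro!: derivative_eq_intros)
qed

lemma inj_derivative: "inj (frechet_derivative \<Phi> (at \<xi>))"
proof -
  define S where "S d = (\<Sum>i\<in>J. (w i * (exp (2 * inner (a i) \<xi>) * (2 * inner (a i) d))) *\<^sub>R a i)" for d
  have D: "frechet_derivative \<Phi> (at \<xi>) = (\<lambda>d. S d + (d - P d))"
    using frechet_derivative_at[OF \<Phi>_has_derivative] unfolding S_def by simp
  have zero: "d = 0" if d: "S d + (d - P d) = 0" for d
  proof -
    have SW: "S d \<in> span (a ` J)" unfolding S_def by (intro span_sum span_scale span_base) auto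
    have "inner (d - P d) (d - P d) = inner (S d + (d - P d)) (d - P d)"
      using P_orthogonal[OF SW, of d] by (simp add: inner_add_left inner_commute[of "S d"])
    then have dP: "d = P d" using d by simp
    then have "inner (S d) d = 0" using d by simp
    moreover have "inner (S d) d = (\<Sum>i\<in>J. 2 * w i * exp (2 * inner (a i) \<xi>) * (inner (a i) d)\<^sup>2)"
      unfolding S_def by (simp add: inner_sum_left power2_eq_square mult_ac)
    ultimately have "\<forall>i\<in>J. 2 * w i * exp (2 * inner (a i) \<xi>) * (inner (a i) d)\<^sup>2 = 0"
      using w_pos sum_nonneg_eq_0_iff[OF finite_J, of "\<lambda>i. 2 * w i * exp (2 * inner (a i) \<xi>) * (inner (a i) d)\<^sup>2"]
      by (simp add: less_imp_le)
    then have "\<forall>i\<in>J. inner (a i) d = 0" using w_pos by force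
    moreover have "d \<in> span (a ` J)" using dP P_in_span by metis
    ultimately show "d = 0" by (intro span_image_eq_0_if_orthogonal)
  qed
  have lin: "linear (\<lambda>d. S d + (d - P d))"
    using has_derivative_linear[OF \<Phi>_has_derivative] unfolding S_def .
  show ?thesis unfolding D linear_injective_0[OF lin] using zero by blast
qed

lemma inj_\<Phi>: "inj \<Phi>"
proof (rule injI)
  fix \<xi> \<xi>' assume eq: "\<Phi> \<xi> = \<Phi> \<xi>'"
  define z where "z = exp_moment J w a \<xi> - exp_moment J w a \<xi>'"
  have z: "z = (\<xi>' - P \<xi>') - (\<xi> - P \<xi>)" using eq unfolding z_def \<Phi>_def by (simp add: algebra_simps)
  have "z \<in> span (a ` J)" unfolding z_def by (intro span_diff exp_moment_in_span)
  moreover have "inner z z = inner (\<xi>' - P \<xi>') z - inner (\<xi> - P \<xi>) z"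
    by (subst (1) z, rule inner_diff_left)
  ultimately have "inner z z = 0" by (simp add: P_orthogonal)
  then have moment: "exp_moment J w a \<xi> = exp_moment J w a \<xi>'" and "\<xi> - P \<xi> = \<xi>' - P \<xi>'"
    using z unfolding z_def by auto
  then have "\<xi> - \<xi>' = P \<xi> - P \<xi>'" by (simp add: algebra_simps)
  then have "\<xi> - \<xi>' \<in> span (a ` J)" using span_diff[OF P_in_span P_in_span] by metis
  moreover have "\<forall>i\<in>J. inner (a i) (\<xi> - \<xi>') = 0"
    using moment unfolding exp_moment_eq_iff[OF finite_J w_pos] by (simp add: inner_diff_right)
  ultimately have "\<xi> - \<xi>' = 0" by (rule span_image_eq_0_if_orthogonal)
  then show "\<xi> = \<xi>'" by simp
qed

lemma smooth_\<Phi>: "smooth_on UNIV \<Phi>"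
proof -
  have "smooth_on UNIV (\<lambda>\<xi>. (\<Sum>i\<in>J. (w i * exp (inner (2 *\<^sub>R a i) \<xi>)) *\<^sub>R a i) + (\<xi> - P \<xi>))"
    using linear_P
    by (intro smooth_on_add smooth_on_sum smooth_on_scaleR smooth_on_mult smooth_on_exp_inner
        smooth_on_const smooth_on_linear open_UNIV) (simp_all add: linear_compose_sub linear_id[unfolded id_def])
  then show ?thesis by (rule smooth_on_cong) (simp add: \<Phi>_def exp_moment_def)
qed

sublocale injective_immersion \<Phi>
  using smooth_\<Phi> inj_\<Phi> inj_derivative by unfold_locales

lemma exp_moment_inv_\<Phi>:
  assumes "q \<in> rel_interior (coneC a J)"
  shows "q \<in> range \<Phi>" "exp_moment J w a (inv \<Phi> q) = q"
proof -
  obtain \<xi> where q: "q = exp_moment J w a \<xi>"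
    using assms range_exp_moment[OF finite_J w_pos] by blast
  then have \<Phi>q: "\<Phi> (P \<xi>) = q" by (simp add: \<Phi>_P)
  then show "q \<in> range \<Phi>" by (rule range_eqI[OF sym])
  have "inv \<Phi> q = P \<xi>" using inv_f_eq[OF inj_\<Phi> \<Phi>q] .
  then show "exp_moment J w a (inv \<Phi> q) = q" by (simp add: exp_moment_P q)
qed

end

section \<open>The diagonalized torus action\<close>

locale diagonalized_action =
  fixes act :: "'a::euclidean_space \<Rightarrow> 'v::euclidean_space \<Rightarrow> 'v"
    and v :: "'i::finite \<Rightarrow> 'v"
    and \<alpha> :: "'i \<Rightarrow> 'a \<Rightarrow> real"
  assumes act_linear: "\<And>\<xi>. linear (act \<xi>)"
    and v_orthonormal: "\<And>i j. inner (v i) (v j) = (if i = j then 1 else 0)"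
    and v_span: "span (range v) = UNIV"
    and \<alpha>_linear: "\<And>i. linear (\<alpha> i)"
    and v_eigen: "\<And>\<xi> i. act \<xi> (v i) = \<alpha> i \<xi> *\<^sub>R v i"
begin

definition weight :: "'i \<Rightarrow> 'a" where "weight i = dual_vec (\<alpha> i)"

definition exp_act :: "'a \<Rightarrow> 'v \<Rightarrow> 'v" where
  "exp_act \<xi> y = (\<Sum>i\<in>UNIV. (exp (inner (weight i) \<xi>) * inner y (v i)) *\<^sub>R v i)"

lemma inner_sum_v: "inner (\<Sum>i\<in>UNIV. f i *\<^sub>R v i) (v j) = f j"
  by (simp add: inner_sum_left v_orthonormal if_distrib cong: if_cong)

lemma v_expansion: "y = (\<Sum>i\<in>UNIV. inner y (v i) *\<^sub>R v i)"
proof -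
  define z where "z = y - (\<Sum>i\<in>UNIV. inner y (v i) *\<^sub>R v i)"
  have "inner z (v j) = 0" for j unfolding z_def by (simp add: inner_diff_left inner_sum_v)
  then have "z = 0" using span_eq_0_if_orthogonal_generators[of z "range v"] v_span by auto
  then show ?thesis unfolding z_def by simp
qed

lemma eq_if_inner_v_eq: "(\<And>j. inner y (v j) = inner z (v j)) \<Longrightarrow> y = z"
  using v_expansion[of y] v_expansion[of z] by simp

lemma \<alpha>_eq_inner_weight: "\<alpha> i \<xi> = inner (weight i) \<xi>"
  unfolding weight_def dual_vec_def
  by (simp add: linear_euclidean_expansion[OF \<alpha>_linear, of i \<xi>] inner_sum_left inner_commute[of \<xi>] mult.commute)

lemma act_eq: "act \<xi> y = (\<Sum>i\<in>UNIV. (inner (weight i) \<xi> * inner y (v i)) *\<^sub>R v i)"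
proof -
  have "act \<xi> y = (\<Sum>i\<in>UNIV. inner y (v i) *\<^sub>R act \<xi> (v i))"
    by (subst v_expansion[of y]) (simp add: linear_sum[OF act_linear] linear_scale[OF act_linear])
  then show ?thesis by (simp add: v_eigen \<alpha>_eq_inner_weight mult.commute)
qed

lemma act_funpow: "(act \<xi> ^^ n) y = (\<Sum>i\<in>UNIV. (inner (weight i) \<xi> ^ n * inner y (v i)) *\<^sub>R v i)"
proof (induction n)
  case 0
  then show ?case using v_expansion[of y] by simp
next
  case (Suc n)
  have "(act \<xi> ^^ Suc n) y = act \<xi> ((act \<xi> ^^ n) y)" by simp
  also have "\<dots> = (\<Sum>i\<in>UNIV. (inner (weight i) \<xi> * (inner (weight i) \<xi> ^ n * inner y (v i))) *\<^sub>R v i)"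
    unfolding Suc by (subst act_eq) (simp add: inner_sum_v)
  finally show ?case by (simp add: mult.assoc)
qed

lemma op_exp_act: "op_exp (act \<xi>) y = exp_act \<xi> y"
proof -
  define X where "X i n = inner (weight i) \<xi> ^ n /\<^sub>R fact n" for i n
  have X: "summable (X i)" "suminf (X i) = exp (inner (weight i) \<xi>)" for i
    unfolding X_def by (rule summable_exp_generic) (simp add: exp_def)
  have "op_exp (act \<xi>) y = (\<Sum>n. \<Sum>i\<in>UNIV. (X i n * inner y (v i)) *\<^sub>R v i)"
    unfolding op_exp_def act_funpow X_def by (simp add: scaleR_sum_right divide_inverse mult_ac)
  also have "\<dots> = (\<Sum>i\<in>UNIV. \<Sum>n. (X i n * inner y (v i)) *\<^sub>R v i)"
    by (rule suminf_sum) (intro summable_scaleR_left summable_mult2 X)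
  also have "\<dots> = exp_act \<xi> y"
    unfolding exp_act_def X(2)[symmetric]
    by (intro sum.cong refl) (simp add: suminf_scaleR_left[OF summable_mult2[OF X(1)]] suminf_mult2[OF X(1)])
  finally show ?thesis .
qed

lemma orbitA_eq: "orbitA act y = range (\<lambda>\<xi>. exp_act \<xi> y)"
  unfolding orbitA_def op_exp_act by auto

lemma inner_exp_act: "inner (exp_act \<xi> y) (v j) = exp (inner (weight j) \<xi>) * inner y (v j)"
  unfolding exp_act_def by (rule inner_sum_v)

lemma mu_a_eq: "mu_a act y = (\<Sum>i\<in>UNIV. (inner y (v i))\<^sup>2 *\<^sub>R weight i)"
proof -
  have "inner (act \<xi> y) y = (\<Sum>i\<in>UNIV. (inner y (v i))\<^sup>2 * \<alpha> i \<xi>)" for \<xi>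
    unfolding act_eq
    by (simp add: inner_sum_left inner_sum_right \<alpha>_eq_inner_weight power2_eq_square inner_commute mult_ac)
  then show ?thesis
    unfolding mu_a_def dual_vec_def weight_def
    by (simp add: scaleR_sum_left scaleR_sum_right sum.swap[of _ Basis])
qed

lemma mu_a_exp_act:
  "mu_a act (exp_act \<xi> y) = (\<Sum>i\<in>UNIV. (exp (2 * inner (weight i) \<xi>) * (inner y (v i))\<^sup>2) *\<^sub>R weight i)"
  unfolding mu_a_eq inner_exp_act
  by (simp add: power_mult_distrib exp_double[symmetric] mult.commute)

lemma smooth_on_mu_a: "smooth_on UNIV (mu_a act)"
proof -
  have "smooth_on UNIV (\<lambda>y. \<Sum>i\<in>UNIV. (inner y (v i) * inner y (v i)) *\<^sub>R weight i)"
    using bounded_linear.linear[OF bounded_linear_inner_left]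
    by (intro smooth_on_sum smooth_on_scaleR smooth_on_mult smooth_on_const smooth_on_linear open_UNIV)
  then show ?thesis by (rule smooth_on_cong) (simp add: mu_a_eq power2_eq_square)
qed

lemma smooth_on_exp_act: "smooth_on UNIV (\<lambda>\<xi>. exp_act \<xi> y)"
  unfolding exp_act_def
  by (intro smooth_on_sum smooth_on_scaleR smooth_on_mult smooth_on_exp_inner smooth_on_const open_UNIV)

end

locale diagonal_orbit = diagonalized_action act v \<alpha>
  for act :: "'a::euclidean_space \<Rightarrow> 'v::euclidean_space \<Rightarrow> 'v"
    and v :: "'i::finite \<Rightarrow> 'v"
    and \<alpha> :: "'i \<Rightarrow> 'a \<Rightarrow> real" +
  fixes x :: 'v
begin

abbreviation I :: "'i set" where "I \<equiv> supp v x"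

definition face_index :: "'a set \<Rightarrow> 'i set" where "face_index F = {i \<in> I. weight i \<in> F}"

definition face_vec :: "'a set \<Rightarrow> 'v" where "face_vec F = (\<Sum>i\<in>face_index F. inner x (v i) *\<^sub>R v i)"

lemma in_supp_iff: "i \<in> I \<longleftrightarrow> inner x (v i) \<noteq> 0"
  by (simp add: supp_def)

lemma inner_face_vec: "inner (face_vec F) (v j) = (if j \<in> face_index F then inner x (v j) else 0)"
proof -
  have "face_vec F = (\<Sum>i\<in>UNIV. (if i \<in> face_index F then inner x (v i) else 0) *\<^sub>R v i)"
    unfolding face_vec_def by (simp add: if_distrib[of "\<lambda>c. c *\<^sub>R _"] sum.If_cases)
  then show ?thesis by (simp add: inner_sum_v)
qed

lemma face_eq_coneC_face_index: "F face_of coneC weight I \<Longrightarrow> F \<noteq> {} \<Longrightarrow> F = coneC weight (face_index F)"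
  unfolding face_index_def by (rule face_of_coneC_eq) auto

lemma orbit_face_vec_disjoint:
  assumes F: "F face_of coneC weight I" "F \<noteq> {}" and F': "F' face_of coneC weight I" "F' \<noteq> {}"
    and "F \<noteq> F'"
  shows "orbitA act (face_vec F) \<inter> orbitA act (face_vec F') = {}"
proof (rule ccontr)
  assume "orbitA act (face_vec F) \<inter> orbitA act (face_vec F') \<noteq> {}"
  then obtain \<xi> \<xi>' where eq: "exp_act \<xi> (face_vec F) = exp_act \<xi>' (face_vec F')"
    unfolding orbitA_eq by auto
  have "j \<in> face_index F \<longleftrightarrow> j \<in> face_index F'" for j
    using arg_cong[OF eq, of "\<lambda>y. inner y (v j)"]
    by (auto simp: inner_exp_act inner_face_vec face_index_def in_supp_iff split: if_splits)
  then have "face_index F = face_index F'" by blast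
  then show False using face_eq_coneC_face_index[OF F] face_eq_coneC_face_index[OF F'] \<open>F \<noteq> F'\<close> by simp
qed

lemma mu_a_exp_act_face_vec:
  "mu_a act (exp_act \<xi> (face_vec F)) = exp_moment (face_index F) (\<lambda>i. (inner x (v i))\<^sup>2) weight \<xi>"
proof -
  have "mu_a act (exp_act \<xi> (face_vec F)) =
      (\<Sum>i\<in>UNIV. if i \<in> face_index F then ((inner x (v i))\<^sup>2 * exp (2 * inner (weight i) \<xi>)) *\<^sub>R weight i else 0)"
    unfolding mu_a_exp_act inner_face_vec by (rule sum.cong) auto
  then show ?thesis unfolding exp_moment_def by (simp add: sum.If_cases)
qed

lemma exp_act_face_vec_eq:
  "(\<And>i. i \<in> face_index F \<Longrightarrow> inner (weight i) \<xi> = inner (weight i) \<xi>') \<Longrightarrow>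
    exp_act \<xi> (face_vec F) = exp_act \<xi>' (face_vec F)"
  by (rule eq_if_inner_v_eq) (simp add: inner_exp_act inner_face_vec)

lemma face_index_weights_pos: "\<forall>i\<in>face_index F. (inner x (v i))\<^sup>2 > 0"
  by (simp add: face_index_def in_supp_iff)

lemma bij_betw_mu_a_orbit_face:
  assumes F: "F face_of coneC weight I" "F \<noteq> {}"
  shows "bij_betw (mu_a act) (orbitA act (face_vec F)) (rel_interior F)"
  unfolding bij_betw_def
proof
  show "inj_on (mu_a act) (orbitA act (face_vec F))"
  proof (rule inj_onI)
    fix p q assume "p \<in> orbitA act (face_vec F)" "q \<in> orbitA act (face_vec F)" and pq: "mu_a act p = mu_a act q"
    then obtain \<xi> \<xi>' where p: "p = exp_act \<xi> (face_vec F)" and q: "q = exp_act \<xi>' (face_vec F)"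
      unfolding orbitA_eq by auto
    have "\<forall>i\<in>face_index F. inner (weight i) \<xi> = inner (weight i) \<xi>'"
      using pq unfolding p q mu_a_exp_act_face_vec exp_moment_eq_iff[OF finite face_index_weights_pos] .
    then show "p = q" unfolding p q by (intro exp_act_face_vec_eq) auto
  qed
  have "mu_a act ` orbitA act (face_vec F) = range (exp_moment (face_index F) (\<lambda>i. (inner x (v i))\<^sup>2) weight)"
    unfolding orbitA_eq image_image mu_a_exp_act_face_vec ..
  also have "\<dots> = rel_interior (coneC weight (face_index F))"
    by (rule range_exp_moment[OF finite face_index_weights_pos])
  also have "\<dots> = rel_interior F"
    by (rule arg_cong[OF face_eq_coneC_face_index[OF F, symmetric]])
  finally show "mu_a act ` orbitA act (face_vec F) = rel_interior F" .
qed

lemma diffeo_onto_mu_a_orbit_face: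
  assumes F: "F face_of coneC weight I" "F \<noteq> {}"
  shows "diffeo_onto (mu_a act) (orbitA act (face_vec F)) (rel_interior F)"
proof -
  let ?J = "face_index F" and ?w = "\<lambda>i. (inner x (v i))\<^sup>2"
  obtain P where P: "linear P" "\<And>\<xi>. P \<xi> \<in> span (weight ` ?J)"
    "\<And>\<xi> u. u \<in> span (weight ` ?J) \<Longrightarrow> inner (\<xi> - P \<xi>) u = 0"
    using orthogonal_projection_exists[OF subspace_span] by blast
  interpret E: exp_moment_extension ?J ?w weight P
    by (rule exp_moment_extension.intro) (use P face_index_weights_pos in auto)
  have ri: "rel_interior F = rel_interior (coneC weight ?J)"
    by (rule arg_cong[OF face_eq_coneC_face_index[OF F]])
  have bij: "bij_betw (mu_a act) (orbitA act (face_vec F)) (rel_interior F)"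
    by (rule bij_betw_mu_a_orbit_face[OF F])
  have inverse: "inv_into (orbitA act (face_vec F)) (mu_a act) q = exp_act (inv E.\<Phi> q) (face_vec F)"
    if "q \<in> rel_interior F" for q
  proof (rule inv_into_f_eq[OF bij_betw_imp_inj_on[OF bij]])
    show "exp_act (inv E.\<Phi> q) (face_vec F) \<in> orbitA act (face_vec F)" unfolding orbitA_eq by blast
    show "mu_a act (exp_act (inv E.\<Phi> q) (face_vec F)) = q"
      using E.exp_moment_inv_\<Phi>(2) that ri by (simp add: mu_a_exp_act_face_vec)
  qed
  have "smooth_map_on (rel_interior F) (inv_into (orbitA act (face_vec F)) (mu_a act))"
    unfolding smooth_map_on_def
  proof
    fix q assume "q \<in> rel_interior F"
    then show "\<exists>U g. open U \<and> q \<in> U \<and> smooth_on U g \<and>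
        (\<forall>y\<in>rel_interior F \<inter> U. g y = inv_into (orbitA act (face_vec F)) (mu_a act) y)"
      using E.open_range E.exp_moment_inv_\<Phi>(1) E.smooth_on_comp_inv[OF smooth_on_exp_act] inverse ri
      by (intro exI[of _ "range E.\<Phi>"] exI[of _ "\<lambda>p. exp_act (inv E.\<Phi> p) (face_vec F)"]) auto
  qed
  moreover have "smooth_map_on (orbitA act (face_vec F)) (mu_a act)"
    unfolding smooth_map_on_def using smooth_on_mu_a by blast
  ultimately show ?thesis unfolding diffeo_onto_def using bij by blast
qed

end

section \<open>Orbit closures\<close>

lemma tendsto_ln_of_tendsto_exp:
  fixes u :: "'a \<Rightarrow> real"
  assumes "((\<lambda>n. exp (u n)) \<longlongrightarrow> r) F" "r > 0"
  shows "(u \<longlongrightarrow> ln r) F"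
  using tendsto_ln[OF assms(1)] assms(2) by simp

lemma filterlim_at_bot_of_tendsto_exp_0:
  fixes u :: "'a \<Rightarrow> real"
  assumes "((\<lambda>n. exp (u n)) \<longlongrightarrow> 0) F"
  shows "filterlim u at_bot F"
proof -
  have "filterlim (\<lambda>n. exp (u n)) (at_right 0) F"
    using assms by (rule tendsto_imp_filterlim_at_right) simp
  from filterlim_compose[OF ln_at_0 this] show ?thesis by simp
qed

lemma inner_limits_attained:
  fixes a :: "'i::finite \<Rightarrow> 'a::euclidean_space"
  assumes lim: "\<And>i. i \<in> J \<Longrightarrow> ((\<lambda>n. inner (a i) (\<xi> n)) \<longlongrightarrow> L i) sequentially"
  shows "\<exists>\<xi>'. \<forall>i\<in>J. inner (a i) \<xi>' = L i"
proof -
  define T :: "'a \<Rightarrow> real ^ 'i" where "T \<eta> = (\<chi> i. if i \<in> J then inner (a i) \<eta> else 0)" for \<eta>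
  have "linear T" unfolding T_def by (auto simp: linear_iff vec_eq_iff inner_add_right)
  then have closed: "closed (range T)" by (intro closed_subspace linear_subspace_image subspace_UNIV)
  have "((\<lambda>n. T (\<xi> n)) \<longlongrightarrow> (\<chi> i. if i \<in> J then L i else 0)) sequentially"
    unfolding T_def by (intro tendsto_vec_lambda) (auto intro: lim)
  then have "(\<chi> i. if i \<in> J then L i else 0) \<in> range T"
    by (rule closed_sequentially[OF closed, rotated]) simp
  then obtain \<xi>' where "T \<xi>' = (\<chi> i. if i \<in> J then L i else 0)" by auto
  then have "T \<xi>' $ i = (\<chi> i. if i \<in> J then L i else 0) $ i" for i by simp
  then have component: "(if i \<in> J then inner (a i) \<xi>' else 0) = (if i \<in> J then L i else 0)" for i
    unfolding T_def vec_lambda_beta .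
  show ?thesis
  proof (intro exI ballI)
    show "inner (a i) \<xi>' = L i" if "i \<in> J" for i using component[of i] that by simp
  qed
qed

context diagonalized_action
begin

lemma tendsto_iff_inner_v:
  "(f \<longlongrightarrow> y) F \<longleftrightarrow> (\<forall>i. ((\<lambda>n. inner (f n) (v i)) \<longlongrightarrow> inner y (v i)) F)"
proof
  assume "\<forall>i. ((\<lambda>n. inner (f n) (v i)) \<longlongrightarrow> inner y (v i)) F"
  then have "((\<lambda>n. \<Sum>i\<in>UNIV. inner (f n) (v i) *\<^sub>R v i) \<longlongrightarrow> (\<Sum>i\<in>UNIV. inner y (v i) *\<^sub>R v i)) F"
    by (intro tendsto_sum tendsto_scaleR tendsto_const) auto
  then show "(f \<longlongrightarrow> y) F" by (simp flip: v_expansion)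
qed (auto intro: tendsto_inner)

lemma closure_orbitA_sequentially:
  assumes y: "y \<in> closure (orbitA act z)"
  shows "\<exists>\<xi>. ((\<lambda>n. exp_act (\<xi> n) z) \<longlongrightarrow> y) sequentially"
proof -
  obtain X where X: "\<And>n. X n \<in> orbitA act z" "(X \<longlongrightarrow> y) sequentially"
    using y unfolding closure_sequential by blast
  have "\<forall>n. \<exists>\<xi>. X n = exp_act \<xi> z" using X(1) unfolding orbitA_eq by blast
  then obtain \<xi> where \<xi>: "\<And>n. X n = exp_act (\<xi> n) z" by metis
  have "X = (\<lambda>n. exp_act (\<xi> n) z)" by (rule ext) (rule \<xi>)
  with X(2) show ?thesis by auto
qed

end

context diagonal_orbit
begin

lemma tendsto_exp_act_exposing:
  assumes \<eta>: "\<And>i. i \<in> I \<Longrightarrow> inner (weight i) \<eta> \<le> 0"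
    "\<And>i. i \<in> I \<Longrightarrow> inner (weight i) \<eta> = 0 \<longleftrightarrow> weight i \<in> F"
  shows "((\<lambda>n. exp_act (\<zeta> + real n *\<^sub>R \<eta>) x) \<longlongrightarrow> exp_act \<zeta> (face_vec F)) sequentially"
  unfolding tendsto_iff_inner_v
proof
  fix i
  have seq: "inner (exp_act (\<zeta> + real n *\<^sub>R \<eta>) x) (v i) =
      exp (inner (weight i) \<zeta>) * inner x (v i) * exp (inner (weight i) \<eta>) ^ n" for n
    by (simp add: inner_exp_act inner_add_right exp_add exp_of_nat_mult)
  have lim: "inner (exp_act \<zeta> (face_vec F)) (v i) =
      exp (inner (weight i) \<zeta>) * (if i \<in> face_index F then inner x (v i) else 0)"
    by (simp add: inner_exp_act inner_face_vec)
  consider "i \<notin> I" | "i \<in> face_index F" | "i \<in> I" "i \<notin> face_index F" by blast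
  then show "((\<lambda>n. inner (exp_act (\<zeta> + real n *\<^sub>R \<eta>) x) (v i)) \<longlongrightarrow> inner (exp_act \<zeta> (face_vec F)) (v i))
      sequentially"
  proof cases
    case 1
    then show ?thesis unfolding seq lim by (simp add: face_index_def in_supp_iff)
  next
    case 2
    then have "inner (weight i) \<eta> = 0" using \<eta> unfolding face_index_def by blast
    then show ?thesis unfolding seq lim using 2 by simp
  next
    case 3
    then have "inner (weight i) \<eta> < 0" using \<eta> unfolding face_index_def by force
    then have "((\<lambda>n. exp (inner (weight i) \<eta>) ^ n) \<longlongrightarrow> 0) sequentially"
      by (intro LIMSEQ_power_zero) simp
    then have "((\<lambda>n. exp (inner (weight i) \<zeta>) * inner x (v i) * exp (inner (weight i) \<eta>) ^ n) \<longlongrightarrow> 0)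
        sequentially"
      by (rule tendsto_mult_right_zero)
    then show ?thesis unfolding seq lim using 3 by simp
  qed
qed

lemma orbit_face_vec_subset_closure:
  assumes F: "F face_of coneC weight I" "F \<noteq> {}"
  shows "orbitA act (face_vec F) \<subseteq> closure (orbitA act x)"
proof
  fix p assume "p \<in> orbitA act (face_vec F)"
  then obtain \<zeta> where p: "p = exp_act \<zeta> (face_vec F)" unfolding orbitA_eq by auto
  obtain \<eta> where "\<And>i. i \<in> I \<Longrightarrow> inner (weight i) \<eta> \<le> 0"
    "\<And>i. i \<in> I \<Longrightarrow> inner (weight i) \<eta> = 0 \<longleftrightarrow> weight i \<in> F"
    using face_of_coneC_exposed[OF finite F] by blast
  from tendsto_exp_act_exposing[OF this, of \<zeta>]
  show "p \<in> closure (orbitA act x)"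
    unfolding closure_sequential orbitA_eq p by (intro exI[of _ "\<lambda>n. exp_act (\<zeta> + real n *\<^sub>R \<eta>) x"]) auto
qed

lemma orbit_limit_coordinates:
  assumes lim: "((\<lambda>n. exp_act (\<xi> n) x) \<longlongrightarrow> y) sequentially"
  shows "\<And>i. i \<notin> I \<Longrightarrow> inner y (v i) = 0"
    and "\<And>i. i \<in> I \<Longrightarrow> ((\<lambda>n. exp (inner (weight i) (\<xi> n))) \<longlongrightarrow> inner y (v i) / inner x (v i)) sequentially"
proof -
  have coord: "((\<lambda>n. exp (inner (weight i) (\<xi> n)) * inner x (v i)) \<longlongrightarrow> inner y (v i)) sequentially" for i
    using lim unfolding tendsto_iff_inner_v inner_exp_act by blast
  show "inner y (v i) = 0" if "i \<notin> I" for i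
    using coord[of i] that by (simp add: in_supp_iff LIMSEQ_const_iff)
  show "((\<lambda>n. exp (inner (weight i) (\<xi> n))) \<longlongrightarrow> inner y (v i) / inner x (v i)) sequentially"
    if "i \<in> I" for i
    using tendsto_divide[OF coord[of i] tendsto_const, of "inner x (v i)"] that by (simp add: in_supp_iff)
qed

text \<open>Along a sequence \<open>exp_act (\<xi> n) x\<close> converging to \<open>y\<close>, the coordinates \<open>\<langle>weight i, \<xi> n\<rangle>\<close>
  converge for \<open>i \<in> J = supp v y\<close> and tend to \<open>-\<infinity>\<close> on \<open>I - J\<close>; this forces \<open>coneC weight J\<close> to be a
  face of \<open>coneC weight I\<close> whose orbit contains \<open>y\<close>.\<close>

lemma closure_orbit_subset_face_orbits:
  assumes y: "y \<in> closure (orbitA act x)"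
  obtains F where "F face_of coneC weight I" "F \<noteq> {}" "y \<in> orbitA act (face_vec F)"
proof -
  obtain \<xi> where lim: "((\<lambda>n. exp_act (\<xi> n) x) \<longlongrightarrow> y) sequentially"
    using closure_orbitA_sequentially[OF y] by blast
  define J where "J = {i \<in> I. inner y (v i) \<noteq> 0}"
  define r where "r i = inner y (v i) / inner x (v i)" for i
  have JI: "J \<subseteq> I" unfolding J_def by blast
  have exp_lim: "((\<lambda>n. exp (inner (weight i) (\<xi> n))) \<longlongrightarrow> r i) sequentially" if "i \<in> I" for i
    unfolding r_def using orbit_limit_coordinates(2)[OF lim that] .
  have r_pos: "r i > 0" if "i \<in> J" for i
  proof -
    have "r i \<ge> 0" by (rule tendsto_lowerbound[OF exp_lim]) (use that JI in \<open>auto intro: less_imp_le\<close>)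
    moreover have "r i \<noteq> 0" using that unfolding J_def r_def by (simp add: in_supp_iff)
    ultimately show ?thesis by simp
  qed
  have conv: "((\<lambda>n. inner (weight i) (\<xi> n)) \<longlongrightarrow> ln (r i)) sequentially" if "i \<in> J" for i
    using tendsto_ln_of_tendsto_exp[OF exp_lim r_pos] that JI by blast
  have div: "filterlim (\<lambda>n. inner (weight i) (\<xi> n)) at_bot sequentially" if "i \<in> I - J" for i
    using filterlim_at_bot_of_tendsto_exp_0 exp_lim[of i] that unfolding J_def r_def by auto
  have vanish: "\<forall>i\<in>I - J. s i = 0"
    if "\<forall>i\<in>I. s i \<ge> 0" "(\<Sum>i\<in>I. s i *\<^sub>R weight i) \<in> coneC weight J" for s
    using coneC_vanish_if_divergent[OF finite JI _ div that] conv unfolding convergent_def by blast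
  define F where "F = coneC weight J"
  have face: "F face_of coneC weight I"
    unfolding F_def by (rule coneC_face_of_coneC[OF finite JI vanish])
  have index: "face_index F = J"
    using coneC_generators[OF finite JI vanish] unfolding face_index_def F_def .
  have "\<exists>\<xi>'. \<forall>i\<in>J. inner (weight i) \<xi>' = ln (r i)" using conv by (intro inner_limits_attained)
  then obtain \<xi>' where \<xi>': "\<And>i. i \<in> J \<Longrightarrow> inner (weight i) \<xi>' = ln (r i)" by blast
  have "exp_act \<xi>' (face_vec F) = y"
  proof (rule eq_if_inner_v_eq)
    fix j
    show "inner (exp_act \<xi>' (face_vec F)) (v j) = inner y (v j)"
      using \<xi>' r_pos orbit_limit_coordinates(1)[OF lim, of j]
      by (cases "j \<in> J") (auto simp: inner_exp_act inner_face_vec index r_def J_def in_supp_iff)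
  qed
  moreover have "F \<noteq> {}" unfolding F_def using convex_cone_nonempty[OF convex_cone_coneC] .
  ultimately show ?thesis using that face unfolding orbitA_eq by blast
qed

lemma closure_orbit_eq:
  "closure (orbitA act x) = (\<Union>F\<in>{F. F face_of coneC weight I \<and> F \<noteq> {}}. orbitA act (face_vec F))"
proof (rule subset_antisym)
  show "closure (orbitA act x) \<subseteq> (\<Union>F\<in>{F. F face_of coneC weight I \<and> F \<noteq> {}}. orbitA act (face_vec F))"
  proof
    fix y assume "y \<in> closure (orbitA act x)"
    then obtain F where "F face_of coneC weight I" "F \<noteq> {}" "y \<in> orbitA act (face_vec F)"
      by (rule closure_orbit_subset_face_orbits)
    then show "y \<in> (\<Union>F\<in>{F. F face_of coneC weight I \<and> F \<noteq> {}}. orbitA act (face_vec F))" by blast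
  qed
  show "(\<Union>F\<in>{F. F face_of coneC weight I \<and> F \<noteq> {}}. orbitA act (face_vec F)) \<subseteq> closure (orbitA act x)"
    using orbit_face_vec_subset_closure by (intro UN_least) auto
qed

end

theorem mainTheorem2:
  fixes act :: "'a::euclidean_space \<Rightarrow> 'v::euclidean_space \<Rightarrow> 'v"
    and v :: "'i::finite \<Rightarrow> 'v"
    and \<alpha> :: "'i \<Rightarrow> 'a \<Rightarrow> real"
    and x :: 'v
  assumes act_lin: "\<And>\<xi>. linear (act \<xi>)"
    and act_lin2: "\<And>y. linear (\<lambda>\<xi>. act \<xi> y)"
    and act_inj: "\<And>\<xi> \<eta>. act \<xi> = act \<eta> \<Longrightarrow> \<xi> = \<eta>"
    and act_sym: "\<And>\<xi> y z. inner (act \<xi> y) z = inner y (act \<xi> z)"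
    and act_comm: "\<And>\<xi> \<eta> y. act \<xi> (act \<eta> y) = act \<eta> (act \<xi> y)"
    and v_orth: "\<And>i j. inner (v i) (v j) = (if i = j then 1 else 0)"
    and v_span: "span (range v) = UNIV"
    and \<alpha>_lin: "\<And>i. linear (\<alpha> i)"
    and v_eig: "\<And>\<xi> i. act \<xi> (v i) = \<alpha> i \<xi> *\<^sub>R v i"
  shows "(\<forall>F. F face_of coneC (\<lambda>i. dual_vec (\<alpha> i)) (supp v x) \<and> F \<noteq> {} \<longrightarrow>
            (let J = {i \<in> supp v x. dual_vec (\<alpha> i) \<in> F};
                 vF = (\<Sum>i\<in>J. inner x (v i) *\<^sub>R v i)
             in diffeo_onto (mu_a act) (orbitA act vF) (rel_interior F)))
       \<and> closure (orbitA act x) =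
           (\<Union>F\<in>{F. F face_of coneC (\<lambda>i. dual_vec (\<alpha> i)) (supp v x) \<and> F \<noteq> {}}.
              orbitA act (\<Sum>i\<in>{i \<in> supp v x. dual_vec (\<alpha> i) \<in> F}. inner x (v i) *\<^sub>R v i))
       \<and> (\<forall>F F'. F face_of coneC (\<lambda>i. dual_vec (\<alpha> i)) (supp v x) \<and> F \<noteq> {}
              \<and> F' face_of coneC (\<lambda>i. dual_vec (\<alpha> i)) (supp v x) \<and> F' \<noteq> {} \<and> F \<noteq> F' \<longrightarrow>
              orbitA act (\<Sum>i\<in>{i \<in> supp v x. dual_vec (\<alpha> i) \<in> F}. inner x (v i) *\<^sub>R v i)
              \<inter> orbitA act (\<Sum>i\<in>{i \<in> supp v x. dual_vec (\<alpha> i) \<in> F'}. inner x (v i) *\<^sub>R v i) = {})"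
proof -
  interpret diagonal_orbit act v \<alpha> x
    using act_lin v_orth v_span \<alpha>_lin v_eig by (simp add: diagonal_orbit_def diagonalized_action_def)
  have weight: "(\<lambda>i. dual_vec (\<alpha> i)) = weight" by (simp add: weight_def fun_eq_iff)
  have index: "{i \<in> supp v x. dual_vec (\<alpha> i) \<in> F} = face_index F" for F
    by (simp add: face_index_def weight_def)
  have vec: "(\<Sum>i\<in>face_index F. inner x (v i) *\<^sub>R v i) = face_vec F" for F by (simp add: face_vec_def)
  show ?thesis
    unfolding Let_def index vec weight
  proof (intro conjI allI impI)
    show "diffeo_onto (mu_a act) (orbitA act (face_vec F)) (rel_interior F)"
      if "F face_of coneC weight I \<and> F \<noteq> {}" for F
      using diffeo_onto_mu_a_orbit_face that by blast
    show "closure (orbitA act x) = (\<Union>F\<in>{F. F face_of coneC weight I \<and> F \<noteq> {}}. orbitA act (face_vec F))"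
      by (rule closure_orbit_eq)
    show "orbitA act (face_vec F) \<inter> orbitA act (face_vec F') = {}"
      if "F face_of coneC weight I \<and> F \<noteq> {} \<and> F' face_of coneC weight I \<and> F' \<noteq> {} \<and> F \<noteq> F'" for F F'
      using orbit_face_vec_disjoint that by blast
  qed
qed

end
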